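(* Let $\Bbbk$ be a field of characteristic different from $2$. With $\Theta$ and $\Psi_-$ as below: (a) $\Theta\circ\Psi_-=\Theta=\Psi_-\circ\Theta$; (b) $\mathrm{Im}(\Psi_-)=\mathrm{Im}(\Theta)=\Pi_-$; (c) $\ker(\Psi_-)=\ker(\Theta)$.
   Context: $\mathcal{Q}\mathit{Sym}$ is the graded Hopf algebra of quasi-symmetric functions over $\Bbbk$ with basis $M_\alpha=\sum_{i_1<\cdots<i_k}x_{i_1}^{a_1}\cdots x_{i_k}^{a_k}$, coproduct $\Delta(M_\alpha)=\sum_{\alpha=\beta\gamma}M_\beta\otimes M_\gamma$. $\zeta_{\mathcal Q}$ is the character with $\zeta_{\mathcal Q}(M_\alpha)=1$ if $\alpha=(n)$ or $()$, $0$ otherwise. Characters multiply by convolution; $\bar\varphi(h)=(-1)^n\varphi(h)$ in degree $n$; $\varphi$ is even if $\bar\varphi=\varphi$, odd if $\bar\varphi=\varphi^{-1}$. Write $\zeta_{\mathcal Q}=(\zeta_{\mathcal Q})_+(\zeta_{\mathcal Q})_-$ for the unique decomposition with $(\zeta_{\mathcal Q})_+$ even and $(\zeta_{\mathcal Q})_-$ odd. For each character $\varphi$ there is a unique graded Hopf morphism $F\colon\mathcal{Q}\mathit{Sym}\to\mathcal{Q}\mathit{Sym}$ with $\zeta_{\mathcal Q}\circ F=\varphi$; $\Psi_-$ is the one for $\varphi=(\zeta_{\mathcal Q})_-$ and $\Theta$ the one for $\varphi=\bar\zeta_{\mathcal Q}^{-1}\zeta_{\mathcal Q}$. $\Pi_-$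 is the largest graded subcoalgebra of $\mathcal{Q}\mathit{Sym}$ on which $\bar\zeta_{\mathcal Q}=\zeta_{\mathcal Q}^{-1}$. *)

theory Defs
  imports Main "HOL-Library.Poly_Mapping"
begin

text \<open>The Hopf algebra QSym of quasi-symmetric functions over a field 'k,
  realised concretely in the monomial basis: an element is a finitely supported
  family of coefficients indexed by compositions (lists of positive naturals);
  the monomial quasi-symmetric function M_alpha is single alpha 1.\<close>

type_synonym 'k qsym = "nat list \<Rightarrow>\<^sub>0 'k"
type_synonym 'k qsym2 = "(nat list \<times> nat list) \<Rightarrow>\<^sub>0 'k"

definition is_comp :: "nat list \<Rightarrow> bool" where
  "is_comp a \<longleftrightarrow> (\<forall>x\<in>set a. 0 < x)"

definition QSym :: "'k::field qsym set" where
  "QSym = {f. \<forall>a\<in>Poly_Mapping.keys f. is_comp a}"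

definition Mb :: "nat list \<Rightarrow> 'k::field qsym" where
  "Mb a = Poly_Mapping.single a 1"

definition qsmult :: "'k::field \<Rightarrow> 'k qsym \<Rightarrow> 'k qsym" where
  "qsmult c f = (\<Sum>a\<in>Poly_Mapping.keys f. Poly_Mapping.single a (c * Poly_Mapping.lookup f a))"

definition hcomp :: "nat \<Rightarrow> 'k::field qsym \<Rightarrow> 'k qsym" where
  "hcomp n f = (\<Sum>a\<in>{a\<in>Poly_Mapping.keys f. sum_list a = n}. Poly_Mapping.single a (Poly_Mapping.lookup f a))"

text \<open>Quasi-shuffles (with multiplicity) of two compositions: M_a M_b is the sum
  of M_c over this list.\<close>
fun qsh :: "nat list \<Rightarrow> nat list \<Rightarrow> nat list list" where
  "qsh [] b = [b]"
| "qsh a [] = [a]"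
| "qsh (x # a) (y # b) =
     map ((#) x) (qsh a (y # b)) @ map ((#) y) (qsh (x # a) b) @ map ((#) (x + y)) (qsh a b)"

definition qmult :: "'k::field qsym \<Rightarrow> 'k qsym \<Rightarrow> 'k qsym" where
  "qmult f g = (\<Sum>a\<in>Poly_Mapping.keys f. \<Sum>b\<in>Poly_Mapping.keys g.
      qsmult (Poly_Mapping.lookup f a * Poly_Mapping.lookup g b) (sum_list (map Mb (qsh a b))))"

definition tensor :: "'k::field qsym \<Rightarrow> 'k qsym \<Rightarrow> 'k qsym2" where
  "tensor x y = (\<Sum>b\<in>Poly_Mapping.keys x. \<Sum>c\<in>Poly_Mapping.keys y. Poly_Mapping.single (b, c) (Poly_Mapping.lookup x b * Poly_Mapping.lookup y c))"

definition coprod :: "'k::field qsym \<Rightarrow> 'k qsym2" where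
  "coprod f = (\<Sum>a\<in>Poly_Mapping.keys f. \<Sum>i\<le>length a.
      Poly_Mapping.single (take i a, drop i a) (Poly_Mapping.lookup f a))"

definition counit :: "'k::field qsym \<Rightarrow> 'k" where
  "counit f = Poly_Mapping.lookup f []"

text \<open>Linear functionals on QSym are given by their values on the basis M_alpha
  (normalised to be 0 on non-compositions).\<close>
definition LF :: "(nat list \<Rightarrow> 'k::field) set" where
  "LF = {\<phi>. \<forall>a. \<not> is_comp a \<longrightarrow> \<phi> a = 0}"

definition ev :: "(nat list \<Rightarrow> 'k::field) \<Rightarrow> 'k qsym \<Rightarrow> 'k" where
  "ev \<phi> f = (\<Sum>a\<in>Poly_Mapping.keys f. Poly_Mapping.lookup f a * \<phi> a)"

definition is_character :: "(nat list \<Rightarrow> 'k::field) \<Rightarrow> bool" where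
  "is_character \<phi> \<longleftrightarrow> \<phi> \<in> LF \<and> \<phi> [] = 1 \<and>
     (\<forall>a b. is_comp a \<longrightarrow> is_comp b \<longrightarrow> ev \<phi> (qmult (Mb a) (Mb b)) = \<phi> a * \<phi> b)"

definition conv :: "(nat list \<Rightarrow> 'k::field) \<Rightarrow> (nat list \<Rightarrow> 'k) \<Rightarrow> nat list \<Rightarrow> 'k" where
  "conv \<phi> \<psi> a = (if is_comp a then (\<Sum>i\<le>length a. \<phi> (take i a) * \<psi> (drop i a)) else 0)"

definition eps :: "nat list \<Rightarrow> 'k::field" where
  "eps a = (if a = [] then 1 else 0)"

definition cinv :: "(nat list \<Rightarrow> 'k::field) \<Rightarrow> nat list \<Rightarrow> 'k" where
  "cinv \<phi> = (THE \<psi>. \<psi> \<in> LF \<and> conv \<phi> \<psi> = eps \<and> conv \<psi> \<phi> = eps)"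

definition cbar :: "(nat list \<Rightarrow> 'k::field) \<Rightarrow> nat list \<Rightarrow> 'k" where
  "cbar \<phi> a = (-1) ^ sum_list a * \<phi> a"

definition is_even :: "(nat list \<Rightarrow> 'k::field) \<Rightarrow> bool" where
  "is_even \<phi> \<longleftrightarrow> cbar \<phi> = \<phi>"

definition is_odd :: "(nat list \<Rightarrow> 'k::field) \<Rightarrow> bool" where
  "is_odd \<phi> \<longleftrightarrow> cbar \<phi> = cinv \<phi>"

definition zetaQ :: "nat list \<Rightarrow> 'k::field" where
  "zetaQ a = (if is_comp a \<and> length a \<le> 1 then 1 else 0)"

definition zeta_minus :: "nat list \<Rightarrow> 'k::field" where
  "zeta_minus = (THE \<psi>. \<exists>\<phi>. is_character \<phi> \<and> is_character \<psi> \<and> is_even \<phi> \<and> is_odd \<psi>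
                        \<and> zetaQ = conv \<phi> \<psi>)"

definition theta_char :: "nat list \<Rightarrow> 'k::field" where
  "theta_char = conv (cinv (cbar zetaQ)) zetaQ"

text \<open>Linear endomorphisms of QSym are given by the images of the basis
  (normalised to be 0 on non-compositions), extended linearly by lin.\<close>
definition lin :: "(nat list \<Rightarrow> 'k::field qsym) \<Rightarrow> 'k qsym \<Rightarrow> 'k qsym" where
  "lin F f = (\<Sum>a\<in>Poly_Mapping.keys f. qsmult (Poly_Mapping.lookup f a) (F a))"

definition tensor_map :: "(nat list \<Rightarrow> 'k::field qsym) \<Rightarrow> 'k qsym2 \<Rightarrow> 'k qsym2" where
  "tensor_map F t = (\<Sum>p\<in>Poly_Mapping.keys t. Poly_Mapping.map ((*) (Poly_Mapping.lookup t p)) (tensor (F (fst p)) (F (snd p))))"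

definition is_graded_hopf_morphism :: "(nat list \<Rightarrow> 'k::field qsym) \<Rightarrow> bool" where
  "is_graded_hopf_morphism F \<longleftrightarrow>
     (\<forall>a. \<not> is_comp a \<longrightarrow> F a = 0) \<and>
     (\<forall>a. is_comp a \<longrightarrow> F a \<in> QSym \<and> (\<forall>b\<in>Poly_Mapping.keys (F a). sum_list b = sum_list a)) \<and>
     F [] = Mb [] \<and>
     (\<forall>a b. is_comp a \<longrightarrow> is_comp b \<longrightarrow> lin F (qmult (Mb a) (Mb b)) = qmult (F a) (F b)) \<and>
     (\<forall>a. is_comp a \<longrightarrow> coprod (F a) = tensor_map F (coprod (Mb a))) \<and>
     (\<forall>a. is_comp a \<longrightarrow> counit (F a) = counit (Mb a))"

definition induced_morphism :: "(nat list \<Rightarrow> 'k::field) \<Rightarrow> nat list \<Rightarrow> 'k qsym" where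
  "induced_morphism \<phi> = (THE F. is_graded_hopf_morphism F \<and>
       (\<forall>a. is_comp a \<longrightarrow> ev zetaQ (F a) = \<phi> a))"

definition Psi_minus :: "nat list \<Rightarrow> 'k::field qsym" where
  "Psi_minus = induced_morphism zeta_minus"

definition Theta :: "nat list \<Rightarrow> 'k::field qsym" where
  "Theta = induced_morphism theta_char"

text \<open>C (x) C inside QSym (x) QSym: finite sums of pure tensors of elements of C.\<close>
inductive_set tensor_span :: "'k::field qsym set \<Rightarrow> 'k qsym2 set" for C where
  zero: "0 \<in> tensor_span C"
| add: "x \<in> C \<Longrightarrow> y \<in> C \<Longrightarrow> t \<in> tensor_span C \<Longrightarrow> tensor x y + t \<in> tensor_span C"

definition is_graded_subcoalgebra :: "'k::field qsym set \<Rightarrow> bool" where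
  "is_graded_subcoalgebra C \<longleftrightarrow> C \<subseteq> QSym \<and> 0 \<in> C \<and>
     (\<forall>f\<in>C. \<forall>g\<in>C. f + g \<in> C) \<and> (\<forall>c. \<forall>f\<in>C. qsmult c f \<in> C) \<and>
     (\<forall>f\<in>C. \<forall>n. hcomp n f \<in> C) \<and>
     (\<forall>f\<in>C. coprod f \<in> tensor_span C)"

definition Pi_minus_prop :: "'k::field qsym set \<Rightarrow> bool" where
  "Pi_minus_prop C \<longleftrightarrow> is_graded_subcoalgebra C \<and>
     (\<forall>f\<in>C. ev (cbar zetaQ) f = ev (cinv zetaQ) f)"

definition Pi_minus :: "'k::field qsym set" where
  "Pi_minus = (THE C. Pi_minus_prop C \<and> (\<forall>D. Pi_minus_prop D \<longrightarrow> D \<subseteq> C))"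

end

theory Submission
  imports Defs
begin

text \<open>
  Over a field with \<open>2 \<noteq> 0\<close>, normalized functionals on QSym have unique normalized convolution
  square roots, and the square root of a character is a character. Hence
  \<open>\<zeta>\<^sub>Q = \<zeta>\<^sub>+ \<star> \<zeta>\<^sub>-\<close>, where \<open>\<zeta>\<^sub>-\<close> is the square root of the odd character
  \<open>\<theta> = cbar(\<zeta>\<^sub>Q)\<^sup>-\<^sup>1 \<star> \<zeta>\<^sub>Q\<close>. Graded coalgebra morphisms are determined by their composite with
  \<open>\<zeta>\<^sub>Q\<close>, and precomposition with them respects convolution, bar and inverses. This turns
  \<open>\<zeta>\<^sub>- \<star> \<zeta>\<^sub>- = \<theta>\<close> and \<open>\<zeta>\<^sub>- \<circ> \<Theta> = \<theta>\<close> into \<open>\<Theta> \<circ> \<Psi>\<^sub>- = \<Theta> = \<Psi>\<^sub>- \<circ> \<Theta>\<close> and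
  \<open>Doubling \<circ> \<Psi>\<^sub>- = \<Theta>\<close>, where \<open>Doubling\<close> is induced by \<open>\<zeta>\<^sub>Q \<star> \<zeta>\<^sub>Q\<close>. \<open>Doubling\<close> is triangular
  with respect to length, with diagonal entries \<open>2\<^sup>\<ell>\<^sup>(\<^sup>\<alpha>\<^sup>)\<close>: it is injective and maps the
  image of \<open>\<Psi>\<^sub>-\<close> onto itself, which gives the equality of images and of kernels.

  The image of \<open>\<Theta>\<close> is a graded subcoalgebra on which \<open>cbar \<zeta>\<^sub>Q = \<zeta>\<^sub>Q\<^sup>-\<^sup>1\<close>, because \<open>\<theta>\<close> is
  odd. Conversely, on any such subcoalgebra \<open>\<zeta>\<^sub>Q \<star> \<zeta>\<^sub>Q\<close> and \<open>\<zeta>\<^sub>- \<star> \<zeta>\<^sub>-\<close> agree, hence so do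
  \<open>\<zeta>\<^sub>Q\<close> and \<open>\<zeta>\<^sub>-\<close> (square roots are unique degree by degree); then \<open>\<Psi>\<^sub>-\<close> is the identity
  there, so the subcoalgebra lies in the image of \<open>\<Psi>\<^sub>-\<close>, which is the image of \<open>\<Theta>\<close>.
\<close>

abbreviation coeff :: "('a \<Rightarrow>\<^sub>0 'b::zero) \<Rightarrow> 'a \<Rightarrow> 'b" where
  "coeff \<equiv> Poly_Mapping.lookup"

abbreviation supp :: "('a \<Rightarrow>\<^sub>0 'b::zero) \<Rightarrow> 'a set" where
  "supp \<equiv> Poly_Mapping.keys"

section \<open>Pairing finitely supported families with functionals\<close>

definition pairing :: "('a \<Rightarrow> 'k::comm_ring_1) \<Rightarrow> ('a \<Rightarrow>\<^sub>0 'k) \<Rightarrow> 'k" where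
  "pairing h t = (\<Sum>p\<in>supp t. coeff t p * h p)"

lemma pairing_eq_sum_superset:
  assumes "finite S" "supp t \<subseteq> S"
  shows "pairing h t = (\<Sum>p\<in>S. coeff t p * h p)"
  unfolding pairing_def
  by (rule sum.mono_neutral_left) (use assms in \<open>auto simp: in_keys_iff\<close>)

lemma pairing_add: "pairing h (t1 + t2) = pairing h t1 + pairing h t2"
proof -
  let ?S = "supp t1 \<union> supp t2"
  have S: "finite ?S" by simp
  have "pairing h (t1 + t2) = (\<Sum>p\<in>?S. coeff (t1 + t2) p * h p)"
    by (rule pairing_eq_sum_superset[OF S]) (rule keys_add)
  also have "\<dots> = (\<Sum>p\<in>?S. coeff t1 p * h p) + (\<Sum>p\<in>?S. coeff t2 p * h p)"
    by (simp add: lookup_add distrib_right sum.distrib)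
  also have "\<dots> = pairing h t1 + pairing h t2"
    by (subst (1 2) pairing_eq_sum_superset[OF S]) auto
  finally show ?thesis .
qed

lemma pairing_zero [simp]: "pairing h 0 = 0"
  by (simp add: pairing_def)

lemma pairing_single [simp]: "pairing h (Poly_Mapping.single k c) = c * h k"
  by (cases "c = 0") (simp_all add: pairing_def)

lemma pairing_sum: "pairing h (sum g S) = (\<Sum>s\<in>S. pairing h (g s))"
  by (induction S rule: infinite_finite_induct) (auto simp: pairing_add)

lemma pairing_sum_list: "pairing h (sum_list ts) = (\<Sum>t\<leftarrow>ts. pairing h t)"
  by (induction ts) (auto simp: pairing_add)

lemma pairing_cong: "(\<And>p. p \<in> supp t \<Longrightarrow> h p = g p) \<Longrightarrow> pairing h t = pairing g t"
  unfolding pairing_def by (rule sum.cong) auto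

lemma pairing_add_left: "pairing (\<lambda>p. h p + g p) t = pairing h t + pairing g t"
  by (simp add: pairing_def distrib_left sum.distrib)

lemma pairing_cmult_left: "pairing (\<lambda>p. c * h p) t = c * pairing h t"
  by (simp add: pairing_def sum_distrib_left ac_simps)

lemma pairing_sum_left: "pairing (\<lambda>p. \<Sum>s\<in>S. h s p) t = (\<Sum>s\<in>S. pairing (h s) t)"
  by (simp add: pairing_def sum_distrib_left sum.swap[of _ S])

lemma pairing_if_left: "pairing (\<lambda>p. if P then h p else 0) t = (if P then pairing h t else 0)"
  by (simp add: pairing_def)

lemma pairing_indicator: "pairing (\<lambda>p. if p = k then 1 else 0) t = coeff t k"
  unfolding pairing_def
  by (cases "k \<in> supp t") (auto simp: in_keys_iff if_distrib cong: if_cong)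

lemma lookup_map_mult: "coeff (Poly_Mapping.map ((*) c) t) k = c * coeff t k"
  for c :: "'k::comm_ring_1"
  by (simp add: map.rep_eq when_def)

lemma pairing_map_mult: "pairing h (Poly_Mapping.map ((*) c) t) = c * pairing h t"
proof -
  have "pairing h (Poly_Mapping.map ((*) c) t) = (\<Sum>p\<in>supp t. coeff (Poly_Mapping.map ((*) c) t) p * h p)"
    by (rule pairing_eq_sum_superset) (auto simp: in_keys_iff lookup_map_mult)
  then show ?thesis
    by (simp add: lookup_map_mult pairing_def sum_distrib_left ac_simps)
qed

section \<open>The coordinates of the structure maps of QSym\<close>

lemma ev_eq_pairing: "ev \<phi> f = pairing \<phi> f"
  by (simp add: ev_def pairing_def)

lemma lookup_Mb: "coeff (Mb a :: 'k::field qsym) b = (if b = a then 1 else 0)"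
  by (simp add: Mb_def lookup_single when_def)

lemma keys_Mb [simp]: "supp (Mb a :: 'k::field qsym) = {a}"
  by (simp add: Mb_def)

lemma pairing_Mb [simp]: "pairing h (Mb a) = h a"
  by (simp add: Mb_def)

lemma lookup_qsmult [simp]: "coeff (qsmult c f) a = c * coeff f a"
  unfolding qsmult_def lookup_sum
  by (cases "a \<in> supp f") (auto simp: lookup_single when_def in_keys_iff)

lemma qsmult_1 [simp]: "qsmult 1 f = f"
  by (rule poly_mapping_eqI) simp

lemma qsmult_0_left [simp]: "qsmult 0 f = 0"
  by (rule poly_mapping_eqI) simp

lemma pairing_qsmult: "pairing h (qsmult c f) = c * pairing h f"
  unfolding qsmult_def pairing_sum pairing_single
  by (simp add: pairing_def sum_distrib_left ac_simps)

lemma lookup_hcomp: "coeff (hcomp n f) a = (if sum_list a = n then coeff f a else 0)"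
  unfolding hcomp_def lookup_sum
  by (cases "a \<in> supp f") (auto simp: lookup_single when_def in_keys_iff)

lemma pairing_hcomp: "pairing h (hcomp n f) = pairing (\<lambda>a. if sum_list a = n then h a else 0) f"
proof -
  have "pairing h (hcomp n f) = (\<Sum>a\<in>{a\<in>supp f. sum_list a = n}. coeff f a * h a)"
    unfolding hcomp_def pairing_sum pairing_single ..
  also have "\<dots> = (\<Sum>a\<in>supp f. if sum_list a = n then coeff f a * h a else 0)"
    by (rule sum.inter_filter) simp
  also have "\<dots> = pairing (\<lambda>a. if sum_list a = n then h a else 0) f"
    unfolding pairing_def by (rule sum.cong) auto
  finally show ?thesis .
qed

lemma pairing_eq_sum_hcomp: "pairing h f = (\<Sum>n\<in>sum_list ` supp f. pairing h (hcomp n f))"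
proof -
  have "(\<Sum>n\<in>sum_list ` supp f. pairing h (hcomp n f)) =
        pairing (\<lambda>a. \<Sum>n\<in>sum_list ` supp f. if sum_list a = n then h a else 0) f"
    unfolding pairing_hcomp by (rule pairing_sum_left[symmetric])
  also have "\<dots> = pairing h f"
    by (rule pairing_cong) (simp add: sum.delta')
  finally show ?thesis by simp
qed

lemma keys_hcomp: "\<beta> \<in> supp (hcomp n f) \<Longrightarrow> sum_list \<beta> = n"
  by (simp add: in_keys_iff lookup_hcomp split: if_splits)

lemma lookup_lin: "coeff (lin F f) b = pairing (\<lambda>a. coeff (F a) b) f"
  by (simp add: lin_def lookup_sum pairing_def)

lemma pairing_lin: "pairing h (lin G f) = pairing (\<lambda>b. pairing h (G b)) f"
  unfolding lin_def pairing_sum pairing_qsmult by (simp add: pairing_def)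

lemma lin_Mb [simp]: "lin G (Mb a) = G a"
  by (simp add: lin_def Mb_def qsmult_def poly_mapping_eqI lookup_sum lookup_single when_def in_keys_iff)

lemma lin_zero [simp]: "lin G 0 = 0"
  by (simp add: lin_def)

lemma lin_add: "lin F (f + g) = lin F f + lin F g"
  by (rule poly_mapping_eqI) (simp add: lookup_lin lookup_add pairing_add)

lemma lin_qsmult: "lin F (qsmult c f) = qsmult c (lin F f)"
  by (rule poly_mapping_eqI) (simp add: lookup_lin pairing_qsmult)

lemma lin_lin: "lin G (lin F f) = lin (\<lambda>a. lin G (F a)) f"
  by (rule poly_mapping_eqI) (simp add: lookup_lin pairing_lin)

lemma keys_lin: "\<beta> \<in> supp (lin G f) \<Longrightarrow> \<exists>b\<in>supp f. \<beta> \<in> supp (G b)"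
proof -
  assume "\<beta> \<in> supp (lin G f)"
  then have "pairing (\<lambda>a. coeff (G a) \<beta>) f \<noteq> 0"
    by (simp add: in_keys_iff lookup_lin)
  then obtain b where "b \<in> supp f" "coeff f b * coeff (G b) \<beta> \<noteq> 0"
    unfolding pairing_def by (auto elim: sum.not_neutral_contains_not_neutral)
  then show ?thesis by (auto simp: in_keys_iff)
qed

lemma lookup_coprod: "coeff (coprod f) (u, v) = coeff f (u @ v)"
proof -
  have deconcat: "(\<Sum>i\<le>length a. if take i a = u \<and> drop i a = v then coeff f a else 0) =
      (if a = u @ v then coeff f a else 0)" for a
  proof (cases "a = u @ v")
    case True
    then have "(\<Sum>i\<le>length a. if take i a = u \<and> drop i a = v then coeff f a else 0)
        = (\<Sum>i\<in>{length u}. if take i a = u \<and> drop i a = v then coeff f a else 0)"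
      by (intro sum.mono_neutral_right)
         (auto simp del: take_append drop_append dest!: arg_cong[where f=length])
    then show ?thesis using True by simp
  qed (auto intro!: sum.neutral)
  have "coeff (coprod f) (u, v) =
     (\<Sum>a\<in>supp f. \<Sum>i\<le>length a. if take i a = u \<and> drop i a = v then coeff f a else 0)"
    by (simp add: coprod_def lookup_sum lookup_single when_def eq_commute)
  also have "\<dots> = (\<Sum>a\<in>supp f. if a = u @ v then coeff f a else 0)"
    by (simp only: deconcat)
  also have "\<dots> = coeff f (u @ v)"
    by (cases "u @ v \<in> supp f") (auto simp: in_keys_iff)
  finally show ?thesis .
qed

lemma pairing_coprod: "pairing h (coprod f) = pairing (\<lambda>a. \<Sum>i\<le>length a. h (take i a, drop i a)) f"
  unfolding coprod_def pairing_sum pairing_single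
  by (simp add: pairing_def sum_distrib_left ac_simps)

lemma lookup_tensor: "coeff (tensor x y) (u, v) = coeff x u * coeff y v"
proof -
  have "coeff (tensor x y) (u, v) =
      (\<Sum>b\<in>supp x. \<Sum>c\<in>supp y. if b = u \<and> c = v then coeff x b * coeff y c else 0)"
    by (simp add: tensor_def lookup_sum lookup_single when_def)
  also have "\<dots> = (\<Sum>b\<in>supp x. if b = u then (if v \<in> supp y then coeff x u * coeff y v else 0) else 0)"
    by (rule sum.cong[OF refl]) (auto simp: sum.delta' cong: if_cong)
  also have "\<dots> = coeff x u * coeff y v"
    by (simp add: sum.delta' in_keys_iff)
  finally show ?thesis .
qed

lemma pairing_tensor: "pairing (\<lambda>p. \<alpha> (fst p) * \<beta> (snd p)) (tensor x y) = pairing \<alpha> x * pairing \<beta> y"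
  unfolding tensor_def pairing_sum pairing_single
  by (simp add: pairing_def sum_product ac_simps)

lemma map_mult_tensor: "Poly_Mapping.map ((*) c) (tensor x y) = tensor (qsmult c x) y"
proof (rule poly_mapping_eqI)
  fix k :: "nat list \<times> nat list"
  obtain u v where "k = (u, v)" by force
  then show "coeff (Poly_Mapping.map ((*) c) (tensor x y)) k = coeff (tensor (qsmult c x) y) k"
    by (simp add: lookup_map_mult lookup_tensor)
qed

lemma lookup_tensor_map: "coeff (tensor_map F t) (u, v) =
   pairing (\<lambda>p. coeff (F (fst p)) u * coeff (F (snd p)) v) t"
  by (simp add: tensor_map_def lookup_sum lookup_map_mult lookup_tensor pairing_def)

lemma pairing_tensor_map:
  "pairing h (tensor_map F t) = pairing (\<lambda>p. pairing h (tensor (F (fst p)) (F (snd p)))) t"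
  unfolding tensor_map_def pairing_sum pairing_map_mult by (simp add: pairing_def)

lemma lookup_sum_list_Mb: "coeff (sum_list (map Mb cs) :: 'k::field qsym) c = of_nat (count_list cs c)"
  by (induction cs) (auto simp: lookup_add lookup_Mb)

lemma lookup_qmult:
  "coeff (qmult f g) c = pairing (\<lambda>a. pairing (\<lambda>b. of_nat (count_list (qsh a b) c)) g) f"
  by (simp add: qmult_def lookup_sum lookup_sum_list_Mb pairing_def sum_distrib_left ac_simps)

lemma pairing_qmult_Mb: "pairing h (qmult (Mb a) (Mb b) :: 'k::field qsym) = (\<Sum>c\<leftarrow>qsh a b. h c)"
  by (simp add: qmult_def pairing_qsmult pairing_sum_list lookup_Mb comp_def)

section \<open>Compositions and the convolution of functionals\<close>

lemma is_comp_Nil [simp]: "is_comp []"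
  by (simp add: is_comp_def)

lemma is_comp_Cons [simp]: "is_comp (x # a) \<longleftrightarrow> 0 < x \<and> is_comp a"
  by (simp add: is_comp_def)

lemma is_comp_append [simp]: "is_comp (a @ b) \<longleftrightarrow> is_comp a \<and> is_comp b"
  by (auto simp: is_comp_def)

lemma is_comp_take: "is_comp a \<Longrightarrow> is_comp (take i a)"
  by (auto simp: is_comp_def dest: in_set_takeD)

lemma is_comp_drop: "is_comp a \<Longrightarrow> is_comp (drop i a)"
  by (auto simp: is_comp_def dest: in_set_dropD)

lemma is_comp_sum_list_pos: "is_comp a \<Longrightarrow> a \<noteq> [] \<Longrightarrow> 0 < sum_list a"
  by (cases a) auto

lemma sum_list_take_drop: "sum_list (take i a) + sum_list (drop i a) = sum_list a"
  by (metis append_take_drop_id sum_list_append)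

lemma QSym_keys: "f \<in> QSym \<Longrightarrow> b \<in> supp f \<Longrightarrow> is_comp b"
  by (simp add: QSym_def)

lemma QSym_zero [simp]: "0 \<in> QSym"
  by (simp add: QSym_def)

lemma QSym_Mb: "is_comp a \<Longrightarrow> Mb a \<in> QSym"
  by (simp add: QSym_def)

lemma QSym_add: "f \<in> QSym \<Longrightarrow> g \<in> QSym \<Longrightarrow> f + g \<in> QSym"
  using keys_add[of f g] by (auto simp: QSym_def)

lemma QSym_qsmult: "f \<in> QSym \<Longrightarrow> qsmult c f \<in> QSym"
  by (auto simp: QSym_def in_keys_iff)

lemma QSym_hcomp: "f \<in> QSym \<Longrightarrow> hcomp n f \<in> QSym"
  by (auto simp: QSym_def in_keys_iff lookup_hcomp split: if_splits)

lemma lin_image_add: "x \<in> lin F ` QSym \<Longrightarrow> y \<in> lin F ` QSym \<Longrightarrow> x + y \<in> lin F ` QSym"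
  by (auto simp flip: lin_add intro: QSym_add)

lemma lin_image_qsmult: "x \<in> lin F ` QSym \<Longrightarrow> qsmult c x \<in> lin F ` QSym"
  by (auto simp flip: lin_qsmult intro: QSym_qsmult)

definition raw_conv :: "(nat list \<Rightarrow> 'k::field) \<Rightarrow> (nat list \<Rightarrow> 'k) \<Rightarrow> nat list \<Rightarrow> 'k" where
  "raw_conv \<phi> \<psi> a = (\<Sum>i\<le>length a. \<phi> (take i a) * \<psi> (drop i a))"

definition restrict_comp :: "(nat list \<Rightarrow> 'k::field) \<Rightarrow> nat list \<Rightarrow> 'k" where
  "restrict_comp g a = (if is_comp a then g a else 0)"

lemma LF_iff_restrict_comp: "\<phi> \<in> LF \<longleftrightarrow> restrict_comp \<phi> = \<phi>"
  by (auto simp: LF_def restrict_comp_def fun_eq_iff)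

lemma LF_restrict_comp [simp]: "restrict_comp g \<in> LF"
  by (simp add: LF_def restrict_comp_def)

lemma LF_D: "\<phi> \<in> LF \<Longrightarrow> \<not> is_comp a \<Longrightarrow> \<phi> a = 0"
  by (simp add: LF_def)

lemma conv_eq_restrict_raw_conv: "conv \<phi> \<psi> = restrict_comp (raw_conv \<phi> \<psi>)"
  by (simp add: conv_def restrict_comp_def raw_conv_def fun_eq_iff)

lemma conv_restrict_comp: "conv (restrict_comp g) (restrict_comp h) = restrict_comp (raw_conv g h)"
  by (auto simp: conv_def restrict_comp_def fun_eq_iff raw_conv_def is_comp_take is_comp_drop)

lemma conv_restrict_comp_right: "conv \<phi> (restrict_comp g) = restrict_comp (raw_conv \<phi> g)"
  by (simp add: conv_def restrict_comp_def raw_conv_def fun_eq_iff is_comp_drop)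

lemma conv_restrict_comp_left: "conv (restrict_comp g) \<phi> = restrict_comp (raw_conv g \<phi>)"
  by (simp add: conv_def restrict_comp_def raw_conv_def fun_eq_iff is_comp_take)

lemma raw_conv_LF: "\<phi> \<in> LF \<Longrightarrow> \<psi> \<in> LF \<Longrightarrow> raw_conv \<phi> \<psi> \<in> LF"
  unfolding LF_def raw_conv_def
  by (auto intro!: sum.neutral) (metis append_take_drop_id is_comp_append)

lemma conv_eq_raw_conv: "\<phi> \<in> LF \<Longrightarrow> \<psi> \<in> LF \<Longrightarrow> conv \<phi> \<psi> = raw_conv \<phi> \<psi>"
  using raw_conv_LF LF_iff_restrict_comp conv_eq_restrict_raw_conv by metis

lemma conv_LF [simp]: "conv \<phi> \<psi> \<in> LF"
  by (simp add: conv_eq_restrict_raw_conv)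

lemma eps_LF [simp]: "eps \<in> LF"
  by (simp add: LF_def eps_def)

lemma eps_Nil [simp]: "eps [] = 1"
  by (simp add: eps_def)

lemma restrict_comp_eps: "restrict_comp eps = eps"
  by (simp add: restrict_comp_def eps_def fun_eq_iff)

lemma raw_conv_Nil [simp]: "raw_conv \<phi> \<psi> [] = \<phi> [] * \<psi> []"
  by (simp add: raw_conv_def)

lemma conv_Nil [simp]: "conv \<phi> \<psi> [] = \<phi> [] * \<psi> []"
  by (simp add: conv_def)

lemma sum_atMost_split_first: "(\<Sum>i\<le>n. g i) = g 0 + (\<Sum>i\<in>{1..n}. g i)" for n :: nat
proof -
  have "{..n} = insert 0 {1..n}" by auto
  then show ?thesis by simp
qed

lemma sum_atMost_split_last: "(\<Sum>i\<le>n. g i) = (\<Sum>i<n. g i) + g n" for n :: nat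
  by (simp add: lessThan_Suc_atMost[symmetric])

lemma sum_triangle_reindex:
  "(\<Sum>i\<le>n. \<Sum>j\<le>i. f j i) = (\<Sum>j\<le>n. \<Sum>k\<le>n - j. f j (j + k))" for n :: nat
proof (induction n)
  case (Suc n)
  have "(\<Sum>j\<le>n. \<Sum>k\<le>Suc n - j. f j (j + k)) = (\<Sum>j\<le>n. (\<Sum>k\<le>n - j. f j (j + k)) + f j (Suc n))"
    by (intro sum.cong refl) (simp add: Suc_diff_le)
  then show ?case using Suc by (simp add: sum.distrib add.assoc)
qed simp

lemma raw_conv_split:
  assumes "a \<noteq> []"
  shows "raw_conv \<phi> \<psi> a =
    \<phi> [] * \<psi> a + \<phi> a * \<psi> [] + (\<Sum>i\<in>{1..<length a}. \<phi> (take i a) * \<psi> (drop i a))"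
proof -
  have "{..length a} = insert 0 (insert (length a) {1..<length a})" and "length a \<noteq> 0"
    using assms by auto
  then show ?thesis unfolding raw_conv_def using assms by (simp add: ac_simps)
qed

lemma raw_conv_assoc: "raw_conv (raw_conv \<phi> \<psi>) \<chi> = raw_conv \<phi> (raw_conv \<psi> \<chi>)"
proof
  fix a :: "nat list"
  let ?n = "length a"
  have "raw_conv (raw_conv \<phi> \<psi>) \<chi> a =
      (\<Sum>i\<le>?n. \<Sum>j\<le>i. \<phi> (take j a) * \<psi> (drop j (take i a)) * \<chi> (drop i a))"
    unfolding raw_conv_def by (rule sum.cong[OF refl]) (auto simp: sum_distrib_right min_def)
  also have "\<dots> = (\<Sum>j\<le>?n. \<Sum>k\<le>?n - j.
      \<phi> (take j a) * \<psi> (drop j (take (j + k) a)) * \<chi> (drop (j + k) a))"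
    by (rule sum_triangle_reindex)
  also have "\<dots> = raw_conv \<phi> (raw_conv \<psi> \<chi>) a"
    unfolding raw_conv_def
    by (rule sum.cong[OF refl]) (auto simp: sum_distrib_left take_drop add.commute mult.assoc)
  finally show "raw_conv (raw_conv \<phi> \<psi>) \<chi> a = raw_conv \<phi> (raw_conv \<psi> \<chi>) a" .
qed

lemma raw_conv_eps_left: "raw_conv eps \<phi> = \<phi>"
  unfolding raw_conv_def eps_def fun_eq_iff
  by (subst sum_atMost_split_first) (auto intro!: sum.neutral)

lemma raw_conv_eps_right: "raw_conv \<phi> eps = \<phi>"
  unfolding raw_conv_def eps_def fun_eq_iff
  by (subst sum_atMost_split_last) (auto intro!: sum.neutral)

lemma conv_assoc: "\<phi> \<in> LF \<Longrightarrow> \<psi> \<in> LF \<Longrightarrow> \<chi> \<in> LF \<Longrightarrow> conv (conv \<phi> \<psi>) \<chi> = conv \<phi> (conv \<psi> \<chi>)"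
  by (simp add: conv_eq_raw_conv raw_conv_LF raw_conv_assoc)

lemma conv_eps_left [simp]: "\<phi> \<in> LF \<Longrightarrow> conv eps \<phi> = \<phi>"
  by (simp add: conv_eq_raw_conv raw_conv_eps_left)

lemma conv_eps_right [simp]: "\<phi> \<in> LF \<Longrightarrow> conv \<phi> eps = \<phi>"
  by (simp add: conv_eq_raw_conv raw_conv_eps_right)

text \<open>Normalized functionals are invertible: one-sided inverses are built by recursion on the
  length, and they agree by associativity.\<close>

definition normalized :: "(nat list \<Rightarrow> 'k::field) \<Rightarrow> bool" where
  "normalized \<phi> \<longleftrightarrow> \<phi> \<in> LF \<and> \<phi> [] = 1"

function right_inverse :: "(nat list \<Rightarrow> 'k::field) \<Rightarrow> nat list \<Rightarrow> 'k" where
  "right_inverse \<phi> a = (if a = [] then 1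
     else - (\<Sum>i\<in>{1..length a}. \<phi> (take i a) * right_inverse \<phi> (drop i a)))"
  by auto
termination by (relation "measure (\<lambda>(\<phi>, a). length a)") auto

function left_inverse :: "(nat list \<Rightarrow> 'k::field) \<Rightarrow> nat list \<Rightarrow> 'k" where
  "left_inverse \<phi> a = (if a = [] then 1
     else - (\<Sum>i\<in>{0..<length a}. left_inverse \<phi> (take i a) * \<phi> (drop i a)))"
  by auto
termination by (relation "measure (\<lambda>(\<phi>, a). length a)") auto

declare right_inverse.simps [simp del] left_inverse.simps [simp del]

lemma raw_conv_right_inverse: "\<phi> [] = 1 \<Longrightarrow> raw_conv \<phi> (right_inverse \<phi>) = eps"
  unfolding fun_eq_iff raw_conv_def
  by (subst sum_atMost_split_first) (auto simp: eps_def right_inverse.simps)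

lemma raw_conv_left_inverse: "\<phi> [] = 1 \<Longrightarrow> raw_conv (left_inverse \<phi>) \<phi> = eps"
  unfolding fun_eq_iff raw_conv_def
  by (subst sum_atMost_split_last) (auto simp: eps_def left_inverse.simps atLeast0LessThan)

lemma conv_inverse_unique:
  assumes "\<phi> \<in> LF" "\<psi> \<in> LF" "\<chi> \<in> LF" "conv \<phi> \<psi> = eps" "conv \<chi> \<phi> = eps"
  shows "\<psi> = \<chi>"
  by (metis assms conv_assoc conv_eps_left conv_eps_right)

lemma cinv_spec:
  assumes "normalized \<phi>"
  shows "cinv \<phi> \<in> LF \<and> conv \<phi> (cinv \<phi>) = eps \<and> conv (cinv \<phi>) \<phi> = eps"
proof -
  have L: "\<phi> \<in> LF" and one: "\<phi> [] = 1"
    using assms by (auto simp: normalized_def)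
  let ?r = "restrict_comp (right_inverse \<phi>)" and ?l = "restrict_comp (left_inverse \<phi>)"
  have r: "conv \<phi> ?r = eps"
    by (simp add: conv_restrict_comp_right raw_conv_right_inverse one restrict_comp_eps)
  have l: "conv ?l \<phi> = eps"
    by (simp add: conv_restrict_comp_left raw_conv_left_inverse one restrict_comp_eps)
  have "?r = ?l"
    by (rule conv_inverse_unique[OF L _ _ r l]) auto
  then have "\<exists>!\<psi>. \<psi> \<in> LF \<and> conv \<phi> \<psi> = eps \<and> conv \<psi> \<phi> = eps"
    using r l conv_inverse_unique[OF L] by (metis LF_restrict_comp)
  then show ?thesis unfolding cinv_def by (rule theI')
qed

lemma cinv_LF [simp]: "normalized \<phi> \<Longrightarrow> cinv \<phi> \<in> LF"
  using cinv_spec by blast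

lemma conv_cinv_right [simp]: "normalized \<phi> \<Longrightarrow> conv \<phi> (cinv \<phi>) = eps"
  using cinv_spec by blast

lemma conv_cinv_left [simp]: "normalized \<phi> \<Longrightarrow> conv (cinv \<phi>) \<phi> = eps"
  using cinv_spec by blast

lemma normalized_LF: "normalized \<phi> \<Longrightarrow> \<phi> \<in> LF"
  by (simp add: normalized_def)

lemma cinv_eqI:
  assumes "normalized \<phi>" "\<psi> \<in> LF" "conv \<phi> \<psi> = eps"
  shows "cinv \<phi> = \<psi>"
  by (metis assms conv_inverse_unique cinv_spec normalized_def)

lemma normalized_cinv [simp]:
  assumes "normalized \<phi>"
  shows "normalized (cinv \<phi>)"
proof -
  have "conv \<phi> (cinv \<phi>) [] = 1"
    using assms by simp
  then show ?thesis
    using assms by (simp add: normalized_def)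
qed

lemma normalized_conv [simp]: "normalized \<phi> \<Longrightarrow> normalized \<psi> \<Longrightarrow> normalized (conv \<phi> \<psi>)"
  by (simp add: normalized_def)

lemma normalized_eps [simp]: "normalized eps"
  by (simp add: normalized_def)

lemma cinv_cinv [simp]: "normalized \<phi> \<Longrightarrow> cinv (cinv \<phi>) = \<phi>"
  by (rule cinv_eqI) (simp_all add: normalized_LF)

lemma cinv_conv:
  assumes "normalized \<phi>" "normalized \<psi>"
  shows "cinv (conv \<phi> \<psi>) = conv (cinv \<psi>) (cinv \<phi>)"
  by (rule cinv_eqI) (use assms in \<open>simp_all add: conv_assoc normalized_LF flip: conv_assoc[of \<psi>]\<close>)

lemma conv_cancel_right:
  assumes "normalized z" "X \<in> LF" "Y \<in> LF" "conv X z = conv Y z"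
  shows "X = Y"
proof -
  have "X = conv (conv X z) (cinv z)"
    using assms by (subst conv_assoc) (auto simp: normalized_LF)
  also have "\<dots> = conv (conv Y z) (cinv z)"
    using assms by simp
  also have "\<dots> = Y"
    using assms by (subst conv_assoc) (auto simp: normalized_LF)
  finally show ?thesis .
qed

lemma cbar_LF [simp]: "\<phi> \<in> LF \<Longrightarrow> cbar \<phi> \<in> LF"
  by (simp add: LF_def cbar_def)

lemma normalized_cbar [simp]: "normalized \<phi> \<Longrightarrow> normalized (cbar \<phi>)"
  by (simp add: normalized_def cbar_def)

lemma cbar_cbar [simp]: "cbar (cbar \<phi>) = \<phi>"
  by (simp add: cbar_def fun_eq_iff power_mult_distrib[symmetric])

lemma cbar_conv: "cbar (conv \<phi> \<psi>) = conv (cbar \<phi>) (cbar \<psi>)"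
proof
  fix a :: "nat list"
  have "\<And>i. (-1::'a) ^ sum_list a = (-1) ^ sum_list (take i a) * (-1) ^ sum_list (drop i a)"
    by (metis power_add sum_list_take_drop)
  then show "cbar (conv \<phi> \<psi>) a = conv (cbar \<phi>) (cbar \<psi>) a"
    by (simp add: cbar_def conv_def sum_distrib_left ac_simps)
qed

lemma cbar_eps: "cbar eps = eps"
  by (simp add: cbar_def eps_def fun_eq_iff)

lemma cbar_cinv: "normalized \<phi> \<Longrightarrow> cbar (cinv \<phi>) = cinv (cbar \<phi>)"
  by (rule cinv_eqI[symmetric]) (auto simp: cbar_eps simp flip: cbar_conv)

section \<open>Quasi-shuffles and characters\<close>

lemma qsh_Nil_right [simp]: "qsh a [] = [a]"
  by (cases a) auto

lemma is_comp_qsh: "c \<in> set (qsh a b) \<Longrightarrow> is_comp a \<Longrightarrow> is_comp b \<Longrightarrow> is_comp c"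
  by (induction a b arbitrary: c rule: qsh.induct) auto

lemma sum_list_qsh: "c \<in> set (qsh a b) \<Longrightarrow> sum_list c = sum_list a + sum_list b"
  by (induction a b arbitrary: c rule: qsh.induct) auto

lemma length_qsh: "c \<in> set (qsh a b) \<Longrightarrow> length a \<le> length c \<and> length b \<le> length c"
  by (induction a b arbitrary: c rule: qsh.induct) force+

lemma Nil_in_qsh_iff: "[] \<in> set (qsh a b) \<longleftrightarrow> a = [] \<and> b = []"
  by (induction a b rule: qsh.induct) auto

lemma sum_list_cong_set: "(\<And>x. x \<in> set xs \<Longrightarrow> f x = g x) \<Longrightarrow> (\<Sum>x\<leftarrow>xs. f x) = (\<Sum>x\<leftarrow>xs. g x)"
  by (metis map_eq_conv)

lemma sum_list_product: "(\<Sum>u\<leftarrow>us. \<Sum>v\<leftarrow>vs. f u * g v) = (\<Sum>u\<leftarrow>us. f u) * (\<Sum>v\<leftarrow>vs. g v)"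
  for f g :: "'a \<Rightarrow> 'b::comm_semiring_1"
  by (simp add: sum_list_const_mult sum_list_mult_const)

lemma sum_deconcat_Cons:
  "(\<Sum>k\<le>length (z # c). G (take k (z # c)) (drop k (z # c))) =
   G [] (z # c) + (\<Sum>k\<le>length c. G (z # take k c) (drop k c))"
  for G :: "nat list \<Rightarrow> nat list \<Rightarrow> 'b::comm_monoid_add"
  by (simp only: length_Cons sum.atMost_Suc_shift) simp

text \<open>Compatibility of the quasi-shuffle product with deconcatenation, i.e. the bialgebra axiom
  of QSym in the monomial basis.\<close>

lemma qsh_deconcat:
  fixes G :: "nat list \<Rightarrow> nat list \<Rightarrow> 'b::comm_monoid_add"
  shows "(\<Sum>c\<leftarrow>qsh a b. \<Sum>k\<le>length c. G (take k c) (drop k c)) =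
    (\<Sum>i\<le>length a. \<Sum>j\<le>length b.
       \<Sum>u\<leftarrow>qsh (take i a) (take j b). \<Sum>v\<leftarrow>qsh (drop i a) (drop j b). G u v)"
proof (induction a b arbitrary: G rule: qsh.induct)
  case (3 x a y b)
  let ?S = "\<lambda>a b G. (\<Sum>i\<le>length a. \<Sum>j\<le>length b.
     \<Sum>u\<leftarrow>qsh (take i a) (take j b). \<Sum>v\<leftarrow>qsh (drop i a) (drop j b). (G u v :: 'b))"
  have L: "(\<Sum>c\<leftarrow>qsh (x # a) (y # b). \<Sum>k\<le>length c. G (take k c) (drop k c)) =
     (\<Sum>c\<leftarrow>qsh (x # a) (y # b). G [] c) + ?S a (y # b) (\<lambda>u v. G (x # u) v)
       + ?S (x # a) b (\<lambda>u v. G (y # u) v) + ?S a b (\<lambda>u v. G ((x + y) # u) v)"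
  proof -
    have e: "\<And>z l. (\<Sum>c\<leftarrow>map ((#) z) l. \<Sum>k\<le>length c. G (take k c) (drop k c)) =
       (\<Sum>c\<leftarrow>map ((#) z) l. G [] c) + (\<Sum>c\<leftarrow>l. \<Sum>k\<le>length c. G (z # take k c) (drop k c))"
      by (simp only: map_map comp_def sum_deconcat_Cons sum_list_addf)
    show ?thesis
      by (simp only: qsh.simps map_append sum_list_append e 3(1)[of "\<lambda>u v. G (x # u) v"]
            3(2)[of "\<lambda>u v. G (y # u) v"] 3(3)[of "\<lambda>u v. G ((x+y) # u) v"]) (simp only: ac_simps)
  qed
  have R1: "?S a (y # b) (\<lambda>u v. G (x # u) v) =
     (\<Sum>i\<le>length a. (\<Sum>v\<leftarrow>qsh (drop i a) (y # b). G (x # take i a) v) +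
       (\<Sum>j\<le>length b. \<Sum>u\<leftarrow>qsh (take i a) (y # take j b).
          \<Sum>v\<leftarrow>qsh (drop i a) (drop j b). G (x # u) v))"
    by (simp only: length_Cons sum.atMost_Suc_shift) simp
  have R2: "?S (x # a) b (\<lambda>u v. G (y # u) v) =
     (\<Sum>j\<le>length b. \<Sum>v\<leftarrow>qsh (x # a) (drop j b). G (y # take j b) v) +
     (\<Sum>i\<le>length a. \<Sum>j\<le>length b. \<Sum>u\<leftarrow>qsh (x # take i a) (take j b).
        \<Sum>v\<leftarrow>qsh (drop i a) (drop j b). G (y # u) v)"
    by (simp only: length_Cons sum.atMost_Suc_shift) simp
  have R: "?S (x # a) (y # b) G =
     (\<Sum>c\<leftarrow>qsh (x # a) (y # b). G [] c) +
     (\<Sum>j\<le>length b. \<Sum>v\<leftarrow>qsh (x # a) (drop j b). G (y # take j b) v) +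
     ((\<Sum>i\<le>length a. \<Sum>v\<leftarrow>qsh (drop i a) (y # b). G (x # take i a) v) +
     (\<Sum>i\<le>length a. \<Sum>j\<le>length b.
        (\<Sum>u\<leftarrow>qsh (take i a) (y # take j b). \<Sum>v\<leftarrow>qsh (drop i a) (drop j b). G (x # u) v) +
        (\<Sum>u\<leftarrow>qsh (x # take i a) (take j b). \<Sum>v\<leftarrow>qsh (drop i a) (drop j b). G (y # u) v) +
        (\<Sum>u\<leftarrow>qsh (take i a) (take j b). \<Sum>v\<leftarrow>qsh (drop i a) (drop j b). G ((x + y) # u) v)))"
    by (simp only: length_Cons sum.atMost_Suc_shift) (simp add: sum.distrib comp_def ac_simps)
  show ?case
    unfolding L R R1 R2 by (simp add: sum.distrib ac_simps)
qed simp_all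

lemma sum_qsh_raw_conv:
  "(\<Sum>c\<leftarrow>qsh a b. raw_conv \<alpha> \<beta> c) =
    (\<Sum>i\<le>length a. \<Sum>j\<le>length b.
       (\<Sum>u\<leftarrow>qsh (take i a) (take j b). \<alpha> u) * (\<Sum>v\<leftarrow>qsh (drop i a) (drop j b). \<beta> v))"
  unfolding raw_conv_def qsh_deconcat[of "\<lambda>u v. \<alpha> u * \<beta> v"] sum_list_product ..

lemma is_character_iff: "is_character \<phi> \<longleftrightarrow> normalized \<phi> \<and>
   (\<forall>a b. is_comp a \<longrightarrow> is_comp b \<longrightarrow> (\<Sum>c\<leftarrow>qsh a b. \<phi> c) = \<phi> a * \<phi> b)"
  by (simp add: is_character_def normalized_def ev_eq_pairing pairing_qmult_Mb)

lemma is_character_normalized: "is_character \<phi> \<Longrightarrow> normalized \<phi>"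
  by (simp add: is_character_iff)

lemma is_character_mult:
  "is_character \<phi> \<Longrightarrow> is_comp a \<Longrightarrow> is_comp b \<Longrightarrow> (\<Sum>c\<leftarrow>qsh a b. \<phi> c) = \<phi> a * \<phi> b"
  by (simp add: is_character_iff)

lemma is_character_conv:
  assumes "is_character \<phi>" "is_character \<psi>"
  shows "is_character (conv \<phi> \<psi>)"
proof -
  have conv: "conv \<phi> \<psi> = raw_conv \<phi> \<psi>"
    using assms by (simp add: conv_eq_raw_conv is_character_normalized normalized_LF)
  have "(\<Sum>c\<leftarrow>qsh a b. raw_conv \<phi> \<psi> c) = raw_conv \<phi> \<psi> a * raw_conv \<phi> \<psi> b"
    if ab: "is_comp a" "is_comp b" for a b
  proof -
    have "(\<Sum>c\<leftarrow>qsh a b. raw_conv \<phi> \<psi> c) = (\<Sum>i\<le>length a. \<Sum>j\<le>length b.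
        (\<phi> (take i a) * \<phi> (take j b)) * (\<psi> (drop i a) * \<psi> (drop j b)))"
      unfolding sum_qsh_raw_conv using assms ab
      by (simp add: is_character_mult is_comp_take is_comp_drop)
    also have "\<dots> = raw_conv \<phi> \<psi> a * raw_conv \<phi> \<psi> b"
      by (simp add: raw_conv_def sum_product ac_simps)
    finally show ?thesis .
  qed
  moreover have "normalized (conv \<phi> \<psi>)"
    using assms by (simp add: is_character_normalized)
  ultimately show ?thesis
    by (simp add: is_character_iff conv)
qed

lemma is_character_cbar:
  assumes "is_character \<phi>"
  shows "is_character (cbar \<phi>)"
proof -
  have "(\<Sum>c\<leftarrow>qsh a b. cbar \<phi> c) = cbar \<phi> a * cbar \<phi> b" if ab: "is_comp a" "is_comp b" for a b
  proof -
    have "(\<Sum>c\<leftarrow>qsh a b. cbar \<phi> c) = (\<Sum>c\<leftarrow>qsh a b. (-1) ^ (sum_list a + sum_list b) * \<phi> c)"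
      unfolding cbar_def by (rule sum_list_cong_set) (simp add: sum_list_qsh)
    also have "\<dots> = cbar \<phi> a * cbar \<phi> b"
      by (simp add: sum_list_const_mult is_character_mult[OF assms ab] cbar_def power_add)
    finally show ?thesis .
  qed
  then show ?thesis
    using assms by (simp add: is_character_iff)
qed

lemma sum_eq_sum_plus_diff:
  fixes f g :: "'a \<Rightarrow> 'b::ab_group_add"
  assumes "finite S" "E \<subseteq> S" "\<And>p. p \<in> S - E \<Longrightarrow> f p = g p"
  shows "sum f S = sum g S + (\<Sum>p\<in>E. f p - g p)"
proof -
  have "sum f S = sum f E + sum f (S - E)" "sum g S = sum g E + sum g (S - E)"
    using assms by (metis add.commute sum.subset_diff)+
  moreover have "sum f (S - E) = sum g (S - E)"
    using assms by (auto intro: sum.cong)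
  ultimately show ?thesis by (simp add: sum_subtractf)
qed

lemma sum2_eq_sum2_plus_diff:
  fixes f g :: "nat \<Rightarrow> nat \<Rightarrow> 'b::ab_group_add"
  assumes "E \<subseteq> {..n} \<times> {..m}" "\<And>i j. i \<le> n \<Longrightarrow> j \<le> m \<Longrightarrow> (i, j) \<notin> E \<Longrightarrow> f i j = g i j"
  shows "(\<Sum>i\<le>n. \<Sum>j\<le>m. f i j) = (\<Sum>i\<le>n. \<Sum>j\<le>m. g i j) + (\<Sum>(i,j)\<in>E. f i j - g i j)"
  unfolding sum.cartesian_product
  by (subst sum_eq_sum_plus_diff[of _ E]) (use assms in \<open>auto simp: case_prod_beta\<close>)

lemma sum_qsh_eps: "(\<Sum>c\<leftarrow>qsh a b. eps c) = eps a * (eps b :: 'k::field)"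
proof (cases "a = [] \<and> b = []")
  case False
  then have "(\<Sum>c\<leftarrow>qsh a b. eps c) = (\<Sum>c\<leftarrow>qsh a b. (0::'k))"
    by (intro sum_list_cong_set) (auto simp: eps_def Nil_in_qsh_iff)
  then show ?thesis using False by (auto simp: eps_def)
qed simp

text \<open>Multiplicativity of the inverse on a pair \<open>a, b\<close> follows by induction on the total
  length: in the expansion of \<open>\<phi> \<star> \<phi>\<^sup>-\<^sup>1 = \<epsilon>\<close> at the quasi-shuffles of \<open>a\<close> and \<open>b\<close>,
  only the term with \<open>(i, j) = (0, 0)\<close> is not covered by the induction hypothesis.\<close>

lemma is_character_cinv:
  assumes \<phi>: "is_character \<phi>"
  shows "is_character (cinv \<phi>)"
proof -
  define \<psi> where "\<psi> = cinv \<phi>"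
  have n\<phi>: "normalized \<phi>" and n\<psi>: "normalized \<psi>"
    using \<phi> by (simp_all add: \<psi>_def is_character_normalized)
  have inv: "raw_conv \<phi> \<psi> = eps"
    using n\<phi> n\<psi> by (metis \<psi>_def conv_cinv_right conv_eq_raw_conv normalized_LF)
  have "(\<Sum>c\<leftarrow>qsh a b. \<psi> c) = \<psi> a * \<psi> b" if "is_comp a" "is_comp b" for a b
    using that
  proof (induction "length a + length b" arbitrary: a b rule: less_induct)
    case less
    let ?S = "\<lambda>x y. (\<Sum>v\<leftarrow>qsh x y. \<psi> v)"
    have IH: "?S (drop i a) (drop j b) = \<psi> (drop i a) * \<psi> (drop j b)"
      if "i \<le> length a" "j \<le> length b" "(i, j) \<noteq> (0, 0)" for i j
      by (rule less.hyps) (use that less.prems in \<open>auto simp: is_comp_drop\<close>)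
    have "eps a * eps b = (\<Sum>c\<leftarrow>qsh a b. raw_conv \<phi> \<psi> c)"
      by (simp add: inv sum_qsh_eps)
    also have "\<dots> = (\<Sum>i\<le>length a. \<Sum>j\<le>length b.
        (\<phi> (take i a) * \<phi> (take j b)) * ?S (drop i a) (drop j b))"
      unfolding sum_qsh_raw_conv using less.prems
      by (simp add: is_character_mult[OF \<phi>] is_comp_take)
    also have "\<dots> = (\<Sum>i\<le>length a. \<Sum>j\<le>length b.
          (\<phi> (take i a) * \<phi> (take j b)) * (\<psi> (drop i a) * \<psi> (drop j b)))
       + (\<Sum>(i,j)\<in>{(0,0)}. (\<phi> (take i a) * \<phi> (take j b)) * ?S (drop i a) (drop j b) -
              (\<phi> (take i a) * \<phi> (take j b)) * (\<psi> (drop i a) * \<psi> (drop j b)))"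
      by (rule sum2_eq_sum2_plus_diff) (auto simp: IH)
    also have "\<dots> = raw_conv \<phi> \<psi> a * raw_conv \<phi> \<psi> b + (?S a b - \<psi> a * \<psi> b)"
      using n\<phi> by (simp add: raw_conv_def sum_product ac_simps normalized_def)
    finally show ?case by (simp add: inv)
  qed
  then show ?thesis
    using n\<psi> by (simp add: is_character_iff \<psi>_def)
qed

lemma zetaQ_LF: "zetaQ \<in> LF"
  by (simp add: LF_def zetaQ_def)

lemma normalized_zetaQ [simp]: "normalized zetaQ"
  by (simp add: normalized_def zetaQ_LF zetaQ_def)

lemma is_character_zetaQ: "is_character (zetaQ :: nat list \<Rightarrow> 'k::field)"
proof -
  have "(\<Sum>c\<leftarrow>qsh a b. (zetaQ c :: 'k)) = zetaQ a * zetaQ b"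
    if ab: "is_comp a" "is_comp b" "a \<noteq> []" "b \<noteq> []" for a b
  proof (cases "length a = 1 \<and> length b = 1")
    case True
    then obtain x y where "a = [x]" "b = [y]"
      by (metis One_nat_def Suc_length_conv length_0_conv)
    then show ?thesis using ab by (simp add: zetaQ_def)
  next
    case False
    have "(\<Sum>c\<leftarrow>qsh a b. (zetaQ c :: 'k)) = (\<Sum>c\<leftarrow>qsh a b. 0)"
    proof (rule sum_list_cong_set)
      fix c assume c: "c \<in> set (qsh a b)"
      have "0 < length a" "0 < length b"
        using ab by auto
      then have "2 \<le> length a \<or> 2 \<le> length b"
        using False by arith
      then have "2 \<le> length c"
        using length_qsh[OF c] by linarith
      then show "zetaQ c = 0" by (simp add: zetaQ_def)
    qed
    moreover have "zetaQ a * zetaQ b = (0::'k)"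
      using False ab by (cases a; cases b) (auto simp: zetaQ_def)
    ultimately show ?thesis by simp
  qed
  moreover have "(\<Sum>c\<leftarrow>qsh a b. (zetaQ c :: 'k)) = zetaQ a * zetaQ b" if "a = [] \<or> b = []" for a b
    using that by (auto simp: zetaQ_def)
  ultimately show ?thesis
    by (metis is_character_iff normalized_zetaQ)
qed

section \<open>Square roots and the even-odd factorization\<close>

text \<open>Over a field with \<open>2 \<noteq> 0\<close>, comparing \<open>\<alpha> \<star> \<alpha>\<close> at a nonempty composition \<open>a\<close> determines
  \<open>2 \<alpha>(a)\<close> from the values of \<open>\<alpha>\<close> on shorter compositions; this gives both uniqueness and
  existence of normalized square roots.\<close>

lemma raw_conv_self_inj:
  fixes \<alpha> \<beta> :: "nat list \<Rightarrow> 'k::field"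
  assumes two: "(2::'k) \<noteq> 0" and "\<alpha> [] = 1" "\<beta> [] = 1" "raw_conv \<alpha> \<alpha> = raw_conv \<beta> \<beta>"
  shows "\<alpha> = \<beta>"
proof
  fix a :: "nat list"
  show "\<alpha> a = \<beta> a"
  proof (induction "length a" arbitrary: a rule: less_induct)
    case less
    show ?case
    proof (cases "a = []")
      case False
      have "(\<Sum>i\<in>{1..<length a}. \<alpha> (take i a) * \<alpha> (drop i a)) =
            (\<Sum>i\<in>{1..<length a}. \<beta> (take i a) * \<beta> (drop i a))"
        by (rule sum.cong[OF refl]) (auto simp: less)
      moreover have "raw_conv \<alpha> \<alpha> a = raw_conv \<beta> \<beta> a"
        using assms by simp
      ultimately have "2 * \<alpha> a = 2 * \<beta> a"
        unfolding raw_conv_split[OF False] using assms by simp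
      then show ?thesis using two by simp
    qed (use assms in simp)
  qed
qed

lemma conv_self_inj:
  fixes \<alpha> \<beta> :: "nat list \<Rightarrow> 'k::field"
  assumes "(2::'k) \<noteq> 0" "normalized \<alpha>" "normalized \<beta>" "conv \<alpha> \<alpha> = conv \<beta> \<beta>"
  shows "\<alpha> = \<beta>"
  using assms raw_conv_self_inj by (metis conv_eq_raw_conv normalized_def)

function conv_sqrt :: "(nat list \<Rightarrow> 'k::field) \<Rightarrow> nat list \<Rightarrow> 'k" where
  "conv_sqrt \<theta> a = (if a = [] then 1
     else (\<theta> a - (\<Sum>i\<in>{1..<length a}. conv_sqrt \<theta> (take i a) * conv_sqrt \<theta> (drop i a))) / 2)"
  by auto
termination by (relation "measure (\<lambda>(\<theta>, a). length a)") auto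

declare conv_sqrt.simps [simp del]

lemma raw_conv_sqrt:
  assumes two: "(2::'k::field) \<noteq> 0" and "\<theta> [] = (1::'k)"
  shows "raw_conv (conv_sqrt \<theta>) (conv_sqrt \<theta>) = \<theta>"
proof
  fix a :: "nat list"
  show "raw_conv (conv_sqrt \<theta>) (conv_sqrt \<theta>) a = \<theta> a"
  proof (cases "a = []")
    case False
    have "conv_sqrt \<theta> a =
        (\<theta> a - (\<Sum>i\<in>{1..<length a}. conv_sqrt \<theta> (take i a) * conv_sqrt \<theta> (drop i a))) / 2"
      using False by (simp add: conv_sqrt.simps[of \<theta> a])
    then have "2 * conv_sqrt \<theta> a +
        (\<Sum>i\<in>{1..<length a}. conv_sqrt \<theta> (take i a) * conv_sqrt \<theta> (drop i a)) = \<theta> a"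
      using two by (simp add: field_simps)
    then show ?thesis
      unfolding raw_conv_split[OF False] by (simp add: conv_sqrt.simps[of \<theta> "[]"])
  qed (use assms in \<open>simp add: conv_sqrt.simps\<close>)
qed

text \<open>The induction runs as in \<open>is_character_cinv\<close>, but now two terms of the
  expansion, \<open>(i, j) = (0, 0)\<close> and \<open>(i, j) = (length a, length b)\<close>, escape the induction
  hypothesis; they contribute the same defect, whence the factor 2.\<close>

lemma is_character_of_square:
  fixes \<psi> \<theta> :: "nat list \<Rightarrow> 'k::field"
  assumes two: "(2::'k) \<noteq> 0" and \<theta>: "is_character \<theta>"
    and \<psi>: "normalized \<psi>" and sq: "conv \<psi> \<psi> = \<theta>"
  shows "is_character \<psi>"
proof -
  have sq': "raw_conv \<psi> \<psi> = \<theta>"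
    using sq \<psi> by (simp add: conv_eq_raw_conv normalized_LF)
  have \<psi>0: "\<psi> [] = 1"
    using \<psi> normalized_def by blast
  have "(\<Sum>c\<leftarrow>qsh a b. \<psi> c) = \<psi> a * \<psi> b" if "is_comp a" "is_comp b" for a b
    using that
  proof (induction "length a + length b" arbitrary: a b rule: less_induct)
    case less
    let ?S = "\<lambda>x y. (\<Sum>v\<leftarrow>qsh x y. \<psi> v)"
    show ?case
    proof (cases "a = [] \<or> b = []")
      case False
      have IH_drop: "?S (drop i a) (drop j b) = \<psi> (drop i a) * \<psi> (drop j b)"
        if "i \<le> length a" "j \<le> length b" "(i, j) \<noteq> (0, 0)" for i j
        by (rule less.hyps) (use that less.prems in \<open>auto simp: is_comp_drop\<close>)
      have IH_take: "?S (take i a) (take j b) = \<psi> (take i a) * \<psi> (take j b)"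
        if "i \<le> length a" "j \<le> length b" "(i, j) \<noteq> (length a, length b)" for i j
        by (rule less.hyps) (use that less.prems in \<open>auto simp: is_comp_take min_def\<close>)
      let ?f = "\<lambda>i j. ?S (take i a) (take j b) * ?S (drop i a) (drop j b)"
      let ?g = "\<lambda>i j. (\<psi> (take i a) * \<psi> (drop i a)) * (\<psi> (take j b) * \<psi> (drop j b))"
      have ne: "(0::nat, 0::nat) \<noteq> (length a, length b)"
        using False by auto
      have "\<theta> a * \<theta> b = (\<Sum>c\<leftarrow>qsh a b. raw_conv \<psi> \<psi> c)"
        using \<theta> less.prems by (simp add: sq' is_character_mult)
      also have "\<dots> = (\<Sum>i\<le>length a. \<Sum>j\<le>length b. ?f i j)"
        unfolding sum_qsh_raw_conv ..
      also have "\<dots> = (\<Sum>i\<le>length a. \<Sum>j\<le>length b. ?g i j) +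
          (\<Sum>(i,j)\<in>{(0,0), (length a, length b)}. ?f i j - ?g i j)"
        by (rule sum2_eq_sum2_plus_diff) (auto simp: IH_drop IH_take ac_simps)
      also have "\<dots> = raw_conv \<psi> \<psi> a * raw_conv \<psi> \<psi> b + 2 * (?S a b - \<psi> a * \<psi> b)"
        using ne \<psi>0 by (simp add: raw_conv_def sum_product algebra_simps)
      finally have "2 * (?S a b - \<psi> a * \<psi> b) = 0"
        by (simp add: sq')
      then show ?thesis using two by simp
    qed (use \<psi>0 in auto)
  qed
  then show ?thesis
    using \<psi> by (simp add: is_character_iff)
qed

lemma cbar_inverse_conv_odd:
  assumes "normalized \<chi>"
  shows "cbar (conv (cinv (cbar \<chi>)) \<chi>) = cinv (conv (cinv (cbar \<chi>)) \<chi>)"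
  using assms by (simp add: cbar_conv cinv_conv cbar_cinv)

lemma cbar_inverse_conv_even_odd:
  assumes "normalized p" "normalized m" "cbar p = p" "cbar m = cinv m"
  shows "conv (cinv (cbar (conv p m))) (conv p m) = conv m m"
proof -
  have "cinv (cbar (conv p m)) = conv m (cinv p)"
    using assms by (simp add: cbar_conv cinv_conv)
  then show ?thesis
    using assms by (simp add: conv_assoc normalized_LF flip: conv_assoc[of "cinv p" p m])
qed

lemma square_root_of_odd_is_odd:
  fixes m \<theta> :: "nat list \<Rightarrow> 'k::field"
  assumes two: "(2::'k) \<noteq> 0" and m: "normalized m" and sq: "conv m m = \<theta>" and odd: "cbar \<theta> = cinv \<theta>"
  shows "cbar m = cinv m"
proof -
  have "conv (cinv (cbar m)) (cinv (cbar m)) = cinv (cbar \<theta>)"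
    using m by (simp add: cinv_conv cbar_conv flip: sq)
  also have "\<dots> = \<theta>"
  proof -
    have "normalized \<theta>"
      using m by (simp flip: sq)
    then show ?thesis
      by (simp add: odd)
  qed
  finally have "conv (cinv (cbar m)) (cinv (cbar m)) = conv m m"
    by (simp add: sq)
  then have "cinv (cbar m) = m"
    by (rule conv_self_inj[OF two _ m, rotated]) (use m in simp)
  then show ?thesis
    using m by (metis cinv_cinv normalized_cbar)
qed

text \<open>Every character \<open>\<chi>\<close> factors as \<open>\<chi>\<^sub>+ \<star> \<chi>\<^sub>-\<close> with \<open>\<chi>\<^sub>+\<close> even and \<open>\<chi>\<^sub>-\<close> odd:
  \<open>\<chi>\<^sub>-\<close> is the square root of the odd character \<open>cbar(\<chi>)\<^sup>-\<^sup>1 \<star> \<chi>\<close>.\<close>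

lemma even_odd_factorization:
  fixes \<chi> :: "nat list \<Rightarrow> 'k::field"
  assumes two: "(2::'k) \<noteq> 0" and \<chi>: "is_character \<chi>"
  defines "\<theta> \<equiv> conv (cinv (cbar \<chi>)) \<chi>"
  defines "m \<equiv> restrict_comp (conv_sqrt \<theta>)"
  shows "is_character (conv \<chi> (cinv m)) \<and> is_character m \<and>
    is_even (conv \<chi> (cinv m)) \<and> is_odd m \<and> \<chi> = conv (conv \<chi> (cinv m)) m"
proof -
  have n\<chi>: "normalized \<chi>"
    using \<chi> by (rule is_character_normalized)
  have \<theta>: "is_character \<theta>"
    unfolding \<theta>_def using \<chi> by (intro is_character_conv is_character_cinv is_character_cbar)
  have n\<theta>: "normalized \<theta>"
    using \<theta> by (rule is_character_normalized)
  have nm: "normalized m"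
    by (simp add: m_def normalized_def restrict_comp_def conv_sqrt.simps)
  have m_sq: "conv m m = \<theta>"
    unfolding m_def conv_restrict_comp using n\<theta>
    by (simp add: normalized_def raw_conv_sqrt[OF two] LF_iff_restrict_comp)
  have m: "is_character m"
    by (rule is_character_of_square[OF two \<theta> nm m_sq])
  have m_odd: "cbar m = cinv m"
    using n\<chi> by (intro square_root_of_odd_is_odd[OF two nm m_sq]) (simp add: \<theta>_def cbar_inverse_conv_odd)
  have split: "\<chi> = conv (conv \<chi> (cinv m)) m"
    using nm n\<chi> by (simp add: conv_assoc normalized_LF)
  have "conv (conv (cbar \<chi>) m) m = conv (cbar \<chi>) \<theta>"
    using nm n\<chi> by (simp add: conv_assoc normalized_LF m_sq)
  also have "\<dots> = conv (conv (cbar \<chi>) (cinv (cbar \<chi>))) \<chi>"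
    unfolding \<theta>_def by (rule conv_assoc[symmetric]) (use n\<chi> in \<open>simp_all add: normalized_LF\<close>)
  also have "\<dots> = conv (conv \<chi> (cinv m)) m"
    using n\<chi> by (simp add: normalized_LF flip: split)
  finally have "conv (conv (cbar \<chi>) m) m = conv (conv \<chi> (cinv m)) m" .
  then have "conv (cbar \<chi>) m = conv \<chi> (cinv m)"
    by (rule conv_cancel_right[OF nm, rotated 2]) (use nm n\<chi> in \<open>simp_all add: normalized_LF\<close>)
  then have "cbar (conv \<chi> (cinv m)) = conv \<chi> (cinv m)"
    using nm by (simp add: cbar_conv cbar_cinv m_odd)
  then show ?thesis
    using \<chi> m m_odd split by (simp add: is_even_def is_odd_def is_character_conv is_character_cinv)
qed

lemma odd_factor_unique:
  fixes p m p' m' :: "nat list \<Rightarrow> 'k::field"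
  assumes two: "(2::'k) \<noteq> 0"
    and "normalized p" "normalized m" "is_even p" "is_odd m"
    and "normalized p'" "normalized m'" "is_even p'" "is_odd m'"
    and "conv p m = conv p' m'"
  shows "m = m'"
proof (rule conv_self_inj[OF two])
  have "conv m m = conv (cinv (cbar (conv p m))) (conv p m)"
    using assms(2-5) unfolding is_even_def is_odd_def by (rule cbar_inverse_conv_even_odd[symmetric])
  also have "\<dots> = conv m' m'"
    using assms(6-9) unfolding assms(10) is_even_def is_odd_def by (rule cbar_inverse_conv_even_odd)
  finally show "conv m m = conv m' m'" .
qed (fact assms(3), fact assms(7))

lemma is_character_theta_char: "is_character theta_char"
  unfolding theta_char_def
  by (intro is_character_conv is_character_cinv is_character_cbar is_character_zetaQ)

lemma normalized_theta_char [simp]: "normalized theta_char"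
  using is_character_theta_char is_character_normalized by blast

lemma theta_char_odd: "cbar theta_char = cinv theta_char"
  unfolding theta_char_def by (rule cbar_inverse_conv_odd) simp

definition zeta_plus :: "nat list \<Rightarrow> 'k::field" where
  "zeta_plus = conv zetaQ (cinv zeta_minus)"

context
  assumes two: "(2::'k::field) \<noteq> 0"
begin

lemma zeta_minus_factorization:
  "is_character (zeta_plus :: nat list \<Rightarrow> 'k) \<and> is_character (zeta_minus :: nat list \<Rightarrow> 'k) \<and>
   is_even (zeta_plus :: nat list \<Rightarrow> 'k) \<and> is_odd (zeta_minus :: nat list \<Rightarrow> 'k) \<and>
   zetaQ = conv zeta_plus (zeta_minus :: nat list \<Rightarrow> 'k)"
proof -
  define m :: "nat list \<Rightarrow> 'k" where "m = restrict_comp (conv_sqrt (conv (cinv (cbar zetaQ)) zetaQ))"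
  have factorization: "is_character (conv zetaQ (cinv m)) \<and> is_character m \<and>
    is_even (conv zetaQ (cinv m)) \<and> is_odd m \<and> zetaQ = conv (conv zetaQ (cinv m)) m"
    unfolding m_def by (rule even_odd_factorization[OF two is_character_zetaQ])
  have "zeta_minus = m"
    unfolding zeta_minus_def
  proof (rule the_equality)
    fix \<psi> :: "nat list \<Rightarrow> 'k"
    assume "\<exists>\<phi>. is_character \<phi> \<and> is_character \<psi> \<and> is_even \<phi> \<and> is_odd \<psi> \<and> zetaQ = conv \<phi> \<psi>"
    then show "\<psi> = m"
      using factorization odd_factor_unique[OF two] is_character_normalized by metis
  qed (use factorization in blast)
  then show ?thesis
    using factorization by (simp add: zeta_plus_def)
qed

lemma is_character_zeta_minus: "is_character (zeta_minus :: nat list \<Rightarrow> 'k)"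
  using zeta_minus_factorization by blast

lemma normalized_zeta_minus [simp]: "normalized (zeta_minus :: nat list \<Rightarrow> 'k)"
  using is_character_zeta_minus is_character_normalized by blast

lemma zeta_minus_odd: "cbar zeta_minus = cinv (zeta_minus :: nat list \<Rightarrow> 'k)"
  using zeta_minus_factorization by (simp add: is_odd_def)

lemma is_character_zeta_plus: "is_character (zeta_plus :: nat list \<Rightarrow> 'k)"
  using zeta_minus_factorization by blast

lemma zeta_plus_even: "cbar zeta_plus = (zeta_plus :: nat list \<Rightarrow> 'k)"
  using zeta_minus_factorization by (simp add: is_even_def)

lemma conv_zeta_plus_zeta_minus: "conv zeta_plus zeta_minus = (zetaQ :: nat list \<Rightarrow> 'k)"
  using zeta_minus_factorization by simp

lemma conv_zeta_minus_self: "conv zeta_minus zeta_minus = (theta_char :: nat list \<Rightarrow> 'k)"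
proof -
  have "conv (cinv (cbar (conv zeta_plus zeta_minus))) (conv zeta_plus zeta_minus) =
      conv zeta_minus (zeta_minus :: nat list \<Rightarrow> 'k)"
    using is_character_zeta_plus
    by (intro cbar_inverse_conv_even_odd) (simp_all add: is_character_normalized zeta_plus_even zeta_minus_odd)
  then show ?thesis
    by (simp add: theta_char_def conv_zeta_plus_zeta_minus)
qed

end

section \<open>The graded Hopf endomorphism induced by a character\<close>

text \<open>The coefficient of \<open>M\<^sub>\<beta>\<close> in the image of \<open>M\<^sub>a\<close>: the sum, over all ways of cutting \<open>a\<close>
  into consecutive nonempty blocks \<open>a = a\<^sub>1 \<cdots> a\<^sub>k\<close> with \<open>sum_list a\<^sub>i = \<beta>\<^sub>i\<close>, of
  \<open>\<phi>(a\<^sub>1) \<cdots> \<phi>(a\<^sub>k)\<close>.\<close>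

fun induced_coeff :: "(nat list \<Rightarrow> 'k::field) \<Rightarrow> nat list \<Rightarrow> nat list \<Rightarrow> 'k" where
  "induced_coeff \<phi> a [] = (if a = [] then 1 else 0)"
| "induced_coeff \<phi> a (n # \<beta>) = (\<Sum>i\<in>{1..length a}.
     if sum_list (take i a) = n then \<phi> (take i a) * induced_coeff \<phi> (drop i a) \<beta> else 0)"

lemma induced_coeff_nonzero:
  assumes "induced_coeff \<phi> a \<beta> \<noteq> 0" "is_comp a"
  shows "is_comp \<beta> \<and> sum_list \<beta> = sum_list a \<and> length \<beta> \<le> length a"
  using assms
proof (induction \<beta> arbitrary: a)
  case (Cons n \<beta>)
  from Cons.prems(1) obtain i where i: "i \<in> {1..length a}" and
    nz: "(if sum_list (take i a) = n then \<phi> (take i a) * induced_coeff \<phi> (drop i a) \<beta> else 0) \<noteq> 0"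
    by (auto elim: sum.not_neutral_contains_not_neutral)
  have s: "sum_list (take i a) = n" and c: "induced_coeff \<phi> (drop i a) \<beta> \<noteq> 0"
    using nz by (auto split: if_splits)
  have IH: "is_comp \<beta> \<and> sum_list \<beta> = sum_list (drop i a) \<and> length \<beta> \<le> length (drop i a)"
    using Cons.IH[OF c] Cons.prems(2) is_comp_drop by blast
  have "take i a \<noteq> []"
    using i by auto
  then have "0 < n"
    using s is_comp_sum_list_pos is_comp_take Cons.prems(2) by blast
  moreover have "n + sum_list \<beta> = sum_list a"
    using IH s sum_list_take_drop by metis
  moreover have "Suc (length \<beta>) \<le> length a"
    using IH i by auto
  ultimately show ?case
    using IH by simp
qed (auto split: if_splits)

lemma finite_induced_coeff_support: "is_comp a \<Longrightarrow> finite {\<beta>. induced_coeff \<phi> a \<beta> \<noteq> 0}"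
proof -
  assume a: "is_comp a"
  have "{\<beta>. induced_coeff \<phi> a \<beta> \<noteq> 0} \<subseteq> {xs. set xs \<subseteq> {..sum_list a} \<and> length xs \<le> length a}"
    using induced_coeff_nonzero[OF _ a] member_le_sum_list by fastforce
  then show ?thesis
    by (rule finite_subset) (simp add: finite_lists_length_le)
qed

lemma induced_coeff_Nil_left: "induced_coeff \<phi> [] \<beta> = (if \<beta> = [] then 1 else 0)"
  by (cases \<beta>) auto

lemma induced_coeff_take_Cons:
  assumes "i \<le> length a"
  shows "induced_coeff \<phi> (take i a) (n # u) = (\<Sum>k\<in>{1..i}.
    if sum_list (take k a) = n then \<phi> (take k a) * induced_coeff \<phi> (take (i - k) (drop k a)) u else 0)"
proof -
  have "induced_coeff \<phi> (take i a) (n # u) = (\<Sum>k\<in>{1..i}. if sum_list (take k (take i a)) = n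
      then \<phi> (take k (take i a)) * induced_coeff \<phi> (drop k (take i a)) u else 0)"
    using assms by (simp add: min_def)
  also have "\<dots> = (\<Sum>k\<in>{1..i}.
      if sum_list (take k a) = n then \<phi> (take k a) * induced_coeff \<phi> (take (i - k) (drop k a)) u else 0)"
    by (rule sum.cong) (auto simp: min_def drop_take)
  finally show ?thesis .
qed

lemma induced_coeff_append:
  "induced_coeff \<phi> a (u @ v) = (\<Sum>i\<le>length a. induced_coeff \<phi> (take i a) u * induced_coeff \<phi> (drop i a) v)"
proof (induction u arbitrary: a)
  case Nil
  show ?case
    by (subst sum_atMost_split_first) (auto intro!: sum.neutral)
next
  case (Cons n u)
  let ?n = "length a"
  let ?H = "\<lambda>k i. (if sum_list (take k a) = n
    then \<phi> (take k a) * induced_coeff \<phi> (take (i - k) (drop k a)) u else 0) * induced_coeff \<phi> (drop i a) v"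
  let ?f = "\<lambda>k i. if k = 0 then 0 else ?H k i"
  have "induced_coeff \<phi> a ((n # u) @ v) = (\<Sum>k\<in>{1..?n}. if sum_list (take k a) = n then \<phi> (take k a) *
      (\<Sum>j\<le>?n - k. induced_coeff \<phi> (take j (drop k a)) u * induced_coeff \<phi> (drop j (drop k a)) v)
      else 0)"
    by (simp only: append_Cons induced_coeff.simps Cons.IH length_drop)
  also have "\<dots> = (\<Sum>k\<le>?n. \<Sum>j\<le>?n - k. ?f k (k + j))"
    by (subst sum_atMost_split_first) (auto intro!: sum.cong simp: sum_distrib_left ac_simps)
  also have "\<dots> = (\<Sum>i\<le>?n. \<Sum>k\<le>i. ?f k i)"
    by (rule sum_triangle_reindex[symmetric])
  also have "\<dots> = (\<Sum>i\<le>?n. induced_coeff \<phi> (take i a) (n # u) * induced_coeff \<phi> (drop i a) v)"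
  proof (rule sum.cong[OF refl])
    fix i assume "i \<in> {..?n}"
    then show "(\<Sum>k\<le>i. ?f k i) = induced_coeff \<phi> (take i a) (n # u) * induced_coeff \<phi> (drop i a) v"
      by (subst sum_atMost_split_first) (simp add: induced_coeff_take_Cons sum_distrib_right del: induced_coeff.simps)
  qed
  finally show ?case .
qed

definition char_morphism :: "(nat list \<Rightarrow> 'k::field) \<Rightarrow> nat list \<Rightarrow> 'k qsym" where
  "char_morphism \<phi> a = (if is_comp a then Abs_poly_mapping (induced_coeff \<phi> a) else 0)"

lemma lookup_char_morphism:
  "coeff (char_morphism \<phi> a) \<beta> = (if is_comp a then induced_coeff \<phi> a \<beta> else 0)"
  by (simp add: char_morphism_def finite_induced_coeff_support)

lemma keys_char_morphism: "\<beta> \<in> supp (char_morphism \<phi> a) \<longleftrightarrow> is_comp a \<and> induced_coeff \<phi> a \<beta> \<noteq> 0"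
  by (simp add: in_keys_iff lookup_char_morphism)

lemma char_morphism_Nil: "char_morphism \<phi> [] = Mb []"
  by (rule poly_mapping_eqI) (simp add: lookup_char_morphism lookup_Mb induced_coeff_Nil_left)

lemma char_morphism_not_comp: "\<not> is_comp a \<Longrightarrow> char_morphism \<phi> a = 0"
  by (simp add: char_morphism_def)

definition graded_coalg_hom :: "(nat list \<Rightarrow> 'k::field qsym) \<Rightarrow> bool" where
  "graded_coalg_hom F \<longleftrightarrow>
     (\<forall>a. \<not> is_comp a \<longrightarrow> F a = 0) \<and>
     (\<forall>a. is_comp a \<longrightarrow> F a \<in> QSym \<and> (\<forall>b\<in>supp (F a). sum_list b = sum_list a)) \<and>
     F [] = Mb [] \<and>
     (\<forall>a. is_comp a \<longrightarrow> coprod (F a) = tensor_map F (coprod (Mb a))) \<and>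
     (\<forall>a. is_comp a \<longrightarrow> counit (F a) = counit (Mb a))"

lemma is_graded_hopf_morphism_iff: "is_graded_hopf_morphism F \<longleftrightarrow> graded_coalg_hom F \<and>
   (\<forall>a b. is_comp a \<longrightarrow> is_comp b \<longrightarrow> lin F (qmult (Mb a) (Mb b)) = qmult (F a) (F b))"
  by (auto simp: is_graded_hopf_morphism_def graded_coalg_hom_def)

lemma coprod_eq_tensor_map_iff: "coprod (F a) = tensor_map F (coprod (Mb a)) \<longleftrightarrow>
   (\<forall>u v. coeff (F a) (u @ v) = (\<Sum>i\<le>length a. coeff (F (take i a)) u * coeff (F (drop i a)) v))"
proof -
  have rhs: "coeff (tensor_map F (coprod (Mb a))) (u, v) =
       (\<Sum>i\<le>length a. coeff (F (take i a)) u * coeff (F (drop i a)) v)" for u v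
    by (simp add: lookup_tensor_map pairing_coprod)
  show ?thesis
  proof
    assume "coprod (F a) = tensor_map F (coprod (Mb a))"
    then show "\<forall>u v. coeff (F a) (u @ v) =
        (\<Sum>i\<le>length a. coeff (F (take i a)) u * coeff (F (drop i a)) v)"
      using rhs by (metis lookup_coprod)
  next
    assume h: "\<forall>u v. coeff (F a) (u @ v) =
        (\<Sum>i\<le>length a. coeff (F (take i a)) u * coeff (F (drop i a)) v)"
    show "coprod (F a) = tensor_map F (coprod (Mb a))"
    proof (rule poly_mapping_eqI)
      fix k :: "nat list \<times> nat list"
      obtain u v where k: "k = (u, v)" by force
      show "coeff (coprod (F a)) k = coeff (tensor_map F (coprod (Mb a))) k"
        unfolding k lookup_coprod rhs using h by simp
    qed
  qed
qed

lemma graded_coalg_hom_char_morphism: "graded_coalg_hom (char_morphism \<phi>)"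
proof -
  have "char_morphism \<phi> a \<in> QSym \<and> (\<forall>b\<in>supp (char_morphism \<phi> a). sum_list b = sum_list a)"
    if "is_comp a" for a
  proof -
    have "\<forall>b. induced_coeff \<phi> a b \<noteq> 0 \<longrightarrow> is_comp b \<and> sum_list b = sum_list a"
      using induced_coeff_nonzero that by blast
    then show ?thesis
      by (auto simp: QSym_def keys_char_morphism)
  qed
  moreover have "coprod (char_morphism \<phi> a) = tensor_map (char_morphism \<phi>) (coprod (Mb a))"
    if "is_comp a" for a
    unfolding coprod_eq_tensor_map_iff using that
    by (simp add: lookup_char_morphism induced_coeff_append is_comp_take is_comp_drop)
  moreover have "counit (char_morphism \<phi> a) = counit (Mb a)" if "is_comp a" for a
    using that by (simp add: counit_def lookup_char_morphism lookup_Mb)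
  ultimately show ?thesis
    unfolding graded_coalg_hom_def using char_morphism_not_comp char_morphism_Nil by blast
qed

context
  fixes F :: "nat list \<Rightarrow> 'k::field qsym"
  assumes F: "graded_coalg_hom F"
begin

lemma graded_coalg_hom_not_comp: "\<not> is_comp a \<Longrightarrow> F a = 0"
  using F by (simp add: graded_coalg_hom_def)

lemma graded_coalg_hom_QSym: "is_comp a \<Longrightarrow> F a \<in> QSym"
  using F by (simp add: graded_coalg_hom_def)

lemma graded_coalg_hom_keys:
  assumes "b \<in> supp (F a)"
  shows "is_comp a \<and> is_comp b \<and> sum_list b = sum_list a"
proof -
  have a: "is_comp a"
    using assms graded_coalg_hom_not_comp by fastforce
  then show ?thesis
    using F assms QSym_keys by (auto simp: graded_coalg_hom_def)
qed

lemma graded_coalg_hom_Nil: "F [] = Mb []"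
  using F by (simp add: graded_coalg_hom_def)

lemma graded_coalg_hom_lookup_append: "is_comp a \<Longrightarrow>
   coeff (F a) (u @ v) = (\<Sum>i\<le>length a. coeff (F (take i a)) u * coeff (F (drop i a)) v)"
  using F by (simp add: graded_coalg_hom_def coprod_eq_tensor_map_iff)

lemma graded_coalg_hom_lookup_Nil: "coeff (F a) [] = (if a = [] then 1 else 0)"
  using F by (cases "is_comp a") (auto simp: graded_coalg_hom_def counit_def lookup_Mb)

lemma lin_QSym: "lin F f \<in> QSym"
  unfolding QSym_def using keys_lin graded_coalg_hom_keys by blast

lemma coprod_lin:
  assumes "f \<in> QSym"
  shows "coprod (lin F f) = tensor_map F (coprod f)"
proof (rule poly_mapping_eqI)
  fix k :: "nat list \<times> nat list"
  obtain u v where k: "k = (u, v)" by force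
  have "coeff (lin F f) (u @ v) =
      pairing (\<lambda>a. \<Sum>i\<le>length a. coeff (F (take i a)) u * coeff (F (drop i a)) v) f"
    unfolding lookup_lin by (rule pairing_cong) (use assms QSym_keys graded_coalg_hom_lookup_append in blast)
  then show "coeff (coprod (lin F f)) k = coeff (tensor_map F (coprod f)) k"
    by (simp add: k lookup_coprod lookup_tensor_map pairing_coprod)
qed

lemma hcomp_lin: "hcomp n (lin F f) = lin F (hcomp n f)"
proof (rule poly_mapping_eqI)
  fix \<beta>
  have "pairing (\<lambda>a. if sum_list \<beta> = n then coeff (F a) \<beta> else 0) f =
        pairing (\<lambda>a. if sum_list a = n then coeff (F a) \<beta> else 0) f"
  proof (rule pairing_cong)
    fix a
    show "(if sum_list \<beta> = n then coeff (F a) \<beta> else 0) = (if sum_list a = n then coeff (F a) \<beta> else 0)"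
      using graded_coalg_hom_keys[of \<beta> a] by (cases "coeff (F a) \<beta> = 0") (auto simp: in_keys_iff)
  qed
  then show "coeff (hcomp n (lin F f)) \<beta> = coeff (lin F (hcomp n f)) \<beta>"
    unfolding lookup_hcomp lookup_lin pairing_hcomp pairing_if_left .
qed

end

text \<open>Evaluating \<open>\<zeta>\<^sub>Q\<close> on a homogeneous element of positive degree \<open>m\<close> extracts the coefficient
  of \<open>M\<^sub>(\<^sub>m\<^sub>)\<close>, the only composition of \<open>m\<close> with at most one part.\<close>

lemma ev_zetaQ_homogeneous:
  assumes "f \<in> QSym" "\<forall>\<beta>\<in>supp f. sum_list \<beta> = m" "0 < m"
  shows "ev zetaQ f = coeff f [m]"
proof -
  have "ev zetaQ f = pairing (\<lambda>\<beta>. if \<beta> = [m] then 1 else 0) f"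
    unfolding ev_eq_pairing
  proof (rule pairing_cong)
    fix \<beta> assume "\<beta> \<in> supp f"
    then have "is_comp \<beta>" "sum_list \<beta> = m"
      using assms by (auto simp: QSym_def)
    then show "zetaQ \<beta> = (if \<beta> = [m] then 1 else 0)"
      using assms(3) by (cases \<beta>; cases "tl \<beta>") (auto simp: zetaQ_def)
  qed
  then show ?thesis
    by (simp add: pairing_indicator)
qed

lemma graded_coalg_hom_lookup_singleton:
  assumes "graded_coalg_hom F" "is_comp a"
  shows "coeff (F a) [n] = (if a \<noteq> [] \<and> n = sum_list a then ev zetaQ (F a) else 0)"
proof (cases "a = []")
  case True
  then show ?thesis
    using assms by (simp add: graded_coalg_hom_Nil lookup_Mb)
next
  case False
  have "ev zetaQ (F a) = coeff (F a) [sum_list a]"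
    using assms False is_comp_sum_list_pos graded_coalg_hom_QSym[OF assms(1)]
    by (intro ev_zetaQ_homogeneous) (auto dest: graded_coalg_hom_keys[OF assms(1)])
  moreover have "coeff (F a) [n] = 0" if "n \<noteq> sum_list a"
    using that graded_coalg_hom_keys[OF assms(1), of "[n]" a] by (auto simp: in_keys_iff)
  ultimately show ?thesis
    using False by auto
qed

text \<open>A graded coalgebra morphism is determined by \<open>\<zeta>\<^sub>Q \<circ> F\<close>: the coefficients of length-one
  compositions are the values of \<open>\<zeta>\<^sub>Q \<circ> F\<close>, and the others follow from the coproduct.\<close>

lemma graded_coalg_hom_eqI:
  assumes F: "graded_coalg_hom F" and G: "graded_coalg_hom G"
    and eq: "\<And>a. is_comp a \<Longrightarrow> ev zetaQ (F a) = ev zetaQ (G a)"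
  shows "F = G"
proof
  fix a
  have "coeff (F a) \<beta> = coeff (G a) \<beta>" if "is_comp a" for \<beta>
    using that
  proof (induction \<beta> arbitrary: a)
    case Nil
    then show ?case
      using F G by (simp add: graded_coalg_hom_lookup_Nil)
  next
    case (Cons n \<beta>)
    have "coeff (F (take i a)) [n] = coeff (G (take i a)) [n]" for i
      using graded_coalg_hom_lookup_singleton[OF F] graded_coalg_hom_lookup_singleton[OF G]
        Cons.prems is_comp_take eq by metis
    then show ?case
      using graded_coalg_hom_lookup_append[OF F Cons.prems, of "[n]" \<beta>]
        graded_coalg_hom_lookup_append[OF G Cons.prems, of "[n]" \<beta>] Cons is_comp_drop
      by simp
  qed
  then show "F a = G a"
    using F G by (cases "is_comp a") (auto intro: poly_mapping_eqI simp: graded_coalg_hom_not_comp)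
qed

lemma ev_zetaQ_char_morphism:
  assumes "normalized \<phi>" "is_comp a"
  shows "ev zetaQ (char_morphism \<phi> a) = \<phi> a"
proof (cases "a = []")
  case True
  then show ?thesis
    using assms by (simp add: char_morphism_Nil ev_eq_pairing zetaQ_def normalized_def)
next
  case False
  have "ev zetaQ (char_morphism \<phi> a) = coeff (char_morphism \<phi> a) [sum_list a]"
    using graded_coalg_hom_char_morphism assms False is_comp_sum_list_pos
    by (intro ev_zetaQ_homogeneous) (auto simp: graded_coalg_hom_def)
  also have "\<dots> = (\<Sum>i\<in>{1..length a}. if i = length a then \<phi> a else 0)"
  proof -
    have "coeff (char_morphism \<phi> a) [sum_list a] = (\<Sum>i\<in>{1..length a}.
        if sum_list (take i a) = sum_list a then \<phi> (take i a) * induced_coeff \<phi> (drop i a) [] else 0)"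
      by (simp only: lookup_char_morphism assms(2) if_True induced_coeff.simps(2))
    also have "\<dots> = (\<Sum>i\<in>{1..length a}. if i = length a then \<phi> a else 0)"
      by (intro sum.cong) auto
    finally show ?thesis .
  qed
  also have "\<dots> = \<phi> a"
    using False by (simp add: Suc_le_eq)
  finally show ?thesis .
qed

text \<open>Pullback along graded coalgebra morphisms turns identities between characters into
  identities between the induced morphisms.\<close>

definition pullback :: "(nat list \<Rightarrow> 'k::field qsym) \<Rightarrow> (nat list \<Rightarrow> 'k) \<Rightarrow> nat list \<Rightarrow> 'k" where
  "pullback F \<alpha> a = ev \<alpha> (F a)"

lemma pairing_raw_conv_graded_coalg_hom:
  assumes "graded_coalg_hom F" "is_comp a"
  shows "pairing (raw_conv g h) (F a) = (\<Sum>i\<le>length a. pairing g (F (take i a)) * pairing h (F (drop i a)))"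
proof -
  have "pairing (raw_conv g h) (F a) = pairing (\<lambda>p. g (fst p) * h (snd p)) (coprod (F a))"
    by (simp add: pairing_coprod raw_conv_def[abs_def])
  also have "\<dots> = pairing (\<lambda>p. g (fst p) * h (snd p)) (tensor_map F (coprod (Mb a)))"
    using assms by (simp add: graded_coalg_hom_def)
  also have "\<dots> = (\<Sum>i\<le>length a. pairing g (F (take i a)) * pairing h (F (drop i a)))"
    by (simp add: pairing_tensor_map pairing_tensor pairing_coprod)
  finally show ?thesis .
qed

context
  fixes F :: "nat list \<Rightarrow> 'k::field qsym"
  assumes F: "graded_coalg_hom F"
begin

lemma pullback_LF [simp]: "pullback F \<alpha> \<in> LF"
  using F by (simp add: LF_def pullback_def graded_coalg_hom_not_comp ev_eq_pairing)

lemma pullback_Nil [simp]: "pullback F \<alpha> [] = \<alpha> []"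
  using F by (simp add: pullback_def graded_coalg_hom_Nil ev_eq_pairing)

lemma normalized_pullback [simp]: "normalized \<alpha> \<Longrightarrow> normalized (pullback F \<alpha>)"
  by (simp add: normalized_def)

lemma pullback_conv:
  assumes "\<alpha> \<in> LF" "\<beta> \<in> LF"
  shows "pullback F (conv \<alpha> \<beta>) = conv (pullback F \<alpha>) (pullback F \<beta>)"
proof
  fix a
  show "pullback F (conv \<alpha> \<beta>) a = conv (pullback F \<alpha>) (pullback F \<beta>) a"
  proof (cases "is_comp a")
    case True
    then show ?thesis
      using assms F
      by (simp add: pullback_def conv_eq_raw_conv ev_eq_pairing pairing_raw_conv_graded_coalg_hom)
        (simp add: conv_def raw_conv_def pullback_def ev_eq_pairing)
  next
    case False
    then show ?thesis
      using F by (simp add: pullback_def graded_coalg_hom_not_comp conv_def ev_eq_pairing)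
  qed
qed

lemma pullback_cbar: "pullback F (cbar \<alpha>) = cbar (pullback F \<alpha>)"
proof
  fix a
  have "pairing (cbar \<alpha>) (F a) = pairing (\<lambda>b. (-1) ^ sum_list a * \<alpha> b) (F a)"
    by (rule pairing_cong) (use graded_coalg_hom_keys[OF F] in \<open>simp add: cbar_def\<close>)
  then show "pullback F (cbar \<alpha>) a = cbar (pullback F \<alpha>) a"
    by (simp add: pullback_def ev_eq_pairing cbar_def pairing_cmult_left)
qed

lemma pullback_eps: "pullback F eps = eps"
proof
  fix a
  have "pairing eps (F a) = coeff (F a) []"
    unfolding eps_def pairing_indicator ..
  then show "pullback F eps a = eps a"
    using graded_coalg_hom_lookup_Nil[OF F] by (simp add: pullback_def ev_eq_pairing eps_def)
qed

lemma pullback_cinv: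
  assumes "normalized \<alpha>"
  shows "pullback F (cinv \<alpha>) = cinv (pullback F \<alpha>)"
proof (rule cinv_eqI[symmetric])
  show "conv (pullback F \<alpha>) (pullback F (cinv \<alpha>)) = eps"
    using assms by (simp add: normalized_LF pullback_eps flip: pullback_conv)
qed (use assms in simp_all)

end

lemma pullback_comp: "pullback (\<lambda>a. lin G (F a)) \<alpha> = pullback F (pullback G \<alpha>)"
  by (simp add: pullback_def[abs_def] ev_eq_pairing pairing_lin)

lemma graded_coalg_hom_comp:
  assumes F: "graded_coalg_hom F" and G: "graded_coalg_hom G"
  shows "graded_coalg_hom (\<lambda>a. lin G (F a))"
proof -
  have graded: "lin G (F a) \<in> QSym \<and> (\<forall>b\<in>supp (lin G (F a)). sum_list b = sum_list a)"
    if "is_comp a" for a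
    using lin_QSym[OF G] keys_lin graded_coalg_hom_keys[OF F] graded_coalg_hom_keys[OF G] by metis
  have coprod: "coprod (lin G (F a)) = tensor_map (\<lambda>a. lin G (F a)) (coprod (Mb a))"
    if a: "is_comp a" for a
  proof (subst coprod_eq_tensor_map_iff, intro allI)
    fix u v
    have "coeff (lin G (F a)) (u @ v) = pairing (\<lambda>b. coeff (G b) (u @ v)) (F a)"
      by (simp add: lookup_lin)
    also have "\<dots> = pairing (raw_conv (\<lambda>b. coeff (G b) u) (\<lambda>b. coeff (G b) v)) (F a)"
      by (rule pairing_cong)
        (simp add: graded_coalg_hom_lookup_append[OF G] graded_coalg_hom_keys[OF F] raw_conv_def)
    also have "\<dots> = (\<Sum>i\<le>length a. coeff (lin G (F (take i a))) u * coeff (lin G (F (drop i a))) v)"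
      by (simp add: pairing_raw_conv_graded_coalg_hom[OF F a] lookup_lin)
    finally show "coeff (lin G (F a)) (u @ v) =
        (\<Sum>i\<le>length a. coeff (lin G (F (take i a))) u * coeff (lin G (F (drop i a))) v)" .
  qed
  have counit: "counit (lin G (F a)) = counit (Mb a)" for a
  proof -
    have "coeff (lin G (F a)) [] = pairing (\<lambda>b. if b = [] then 1 else 0) (F a)"
      unfolding lookup_lin by (rule pairing_cong) (simp add: graded_coalg_hom_lookup_Nil[OF G])
    then show ?thesis
      by (simp add: pairing_indicator counit_def graded_coalg_hom_lookup_Nil[OF F] lookup_Mb)
  qed
  show ?thesis
    unfolding graded_coalg_hom_def using graded coprod counit F G
    by (simp add: graded_coalg_hom_not_comp graded_coalg_hom_Nil)
qed

lemma graded_coalg_hom_eqI_pullback: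
  "graded_coalg_hom F \<Longrightarrow> graded_coalg_hom G \<Longrightarrow> pullback F zetaQ = pullback G zetaQ \<Longrightarrow> F = G"
  by (rule graded_coalg_hom_eqI) (auto simp: pullback_def fun_eq_iff)

lemma pullback_char_morphism_zetaQ:
  assumes "normalized \<phi>"
  shows "pullback (char_morphism \<phi>) zetaQ = \<phi>"
proof
  fix a
  show "pullback (char_morphism \<phi>) zetaQ a = \<phi> a"
    using assms LF_D[of \<phi> a] ev_zetaQ_char_morphism[OF assms, of a]
    by (cases "is_comp a") (simp_all add: pullback_def char_morphism_not_comp ev_eq_pairing normalized_def)
qed

lemma count_list_map_Cons: "count_list (map ((#) x) cs) (n # \<gamma>) = (if x = n then count_list cs \<gamma> else 0)"
  by (induction cs) auto

lemma sum_delta_pair: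
  "(\<Sum>p\<le>n. if x = p \<and> y = n - p then C else 0) = (if x + y = (n::nat) then C else (0::'a::comm_monoid_add))"
proof (cases "x \<le> n")
  case True
  have "(\<Sum>p\<le>n. if x = p \<and> y = n - p then C else 0) = (\<Sum>p\<le>n. if p = x then (if y = n - x then C else 0) else 0)"
    by (rule sum.cong) auto
  then show ?thesis
    using True by (auto simp: sum.delta)
qed (auto intro!: sum.neutral)

lemma count_list_qsh_Cons:
  "(of_nat (count_list (qsh b1 b2) (n # \<gamma>)) :: 'k::field) =
     (if b1 \<noteq> [] \<and> hd b1 = n then of_nat (count_list (qsh (tl b1) b2) \<gamma>) else 0) +
     (if b2 \<noteq> [] \<and> hd b2 = n then of_nat (count_list (qsh b1 (tl b2)) \<gamma>) else 0) +
     (\<Sum>p\<le>n. if b1 \<noteq> [] \<and> hd b1 = p then (if b2 \<noteq> [] \<and> hd b2 = n - p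
        then of_nat (count_list (qsh (tl b1) (tl b2)) \<gamma>) else 0) else 0)"
proof (cases "b1 = [] \<or> b2 = []")
  case True
  then show ?thesis
    by (cases b1; cases b2) auto
next
  case False
  then obtain x a y b where b: "b1 = x # a" "b2 = y # b"
    by (meson neq_Nil_conv)
  have "(\<Sum>p\<le>n. if b1 \<noteq> [] \<and> hd b1 = p then (if b2 \<noteq> [] \<and> hd b2 = n - p
        then of_nat (count_list (qsh (tl b1) (tl b2)) \<gamma>) else 0) else 0) =
      (\<Sum>p\<le>n. if x = p \<and> y = n - p then of_nat (count_list (qsh a b) \<gamma>) else (0::'k))"
    using b by (intro sum.cong) auto
  then show ?thesis
    using b by (simp add: count_list_map_Cons sum_delta_pair)
qed

lemma count_list_qsh_Nil: "count_list (qsh b1 b2) [] = (if b1 = [] \<and> b2 = [] then 1 else 0)"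
  by (cases "b1 = [] \<and> b2 = []") (auto simp: Nil_in_qsh_iff)

lemma lookup_qmult_Nil: "coeff (qmult f g) [] = coeff f [] * coeff g []"
proof -
  have "pairing (\<lambda>b. of_nat (count_list (qsh a b) [])) g = coeff g [] * (if a = [] then 1 else 0)" for a
  proof (cases "a = []")
    case True
    have "pairing (\<lambda>b. of_nat (count_list (qsh a b) [])) g = pairing (\<lambda>b. if b = [] then 1 else 0) g"
      by (rule pairing_cong) (simp add: count_list_qsh_Nil True)
    then show ?thesis
      using True by (simp add: pairing_indicator)
  qed (simp add: count_list_qsh_Nil pairing_def)
  then show ?thesis
    unfolding lookup_qmult by (simp add: pairing_cmult_left pairing_indicator)
qed

text \<open>The coefficients of \<open>f \<cdot> g\<close> at compositions with first part \<open>n\<close>: this part comes from \<open>f\<close>,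
  from \<open>g\<close>, or is the sum of first parts of both.\<close>

definition strip_first :: "nat \<Rightarrow> 'k::field qsym \<Rightarrow> 'k qsym" where
  "strip_first n f = (\<Sum>a\<in>supp f. if a \<noteq> [] \<and> hd a = n then Poly_Mapping.single (tl a) (coeff f a) else 0)"

lemma pairing_strip_first: "pairing h (strip_first n f) = pairing (\<lambda>a. if a \<noteq> [] \<and> hd a = n then h (tl a) else 0) f"
  unfolding strip_first_def pairing_sum pairing_def[of _ f] by (rule sum.cong) auto

lemma lookup_strip_first: "coeff (strip_first n f) \<beta> = coeff f (n # \<beta>)"
proof -
  have "coeff (strip_first n f) \<beta> = pairing (\<lambda>a. if a \<noteq> [] \<and> hd a = n then (if tl a = \<beta> then 1 else 0) else 0) f"
    by (simp add: pairing_strip_first flip: pairing_indicator)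
  also have "\<dots> = pairing (\<lambda>a. if a = n # \<beta> then 1 else 0) f"
    by (rule pairing_cong) (auto simp: neq_Nil_conv)
  finally show ?thesis
    by (simp add: pairing_indicator)
qed

lemma lookup_qmult_Cons: "coeff (qmult f g) (n # \<gamma>) =
   coeff (qmult (strip_first n f) g) \<gamma> + coeff (qmult f (strip_first n g)) \<gamma> +
   (\<Sum>p\<le>n. coeff (qmult (strip_first p f) (strip_first (n - p) g)) \<gamma>)"
  unfolding lookup_qmult count_list_qsh_Cons pairing_add_left pairing_sum_left pairing_strip_first
    pairing_if_left ..

lemma lookup_qmult_sum_left:
  "coeff (qmult (\<Sum>i\<in>S. qsmult (c i) (f i)) g) \<gamma> = (\<Sum>i\<in>S. c i * coeff (qmult (f i) g) \<gamma>)"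
  by (simp add: lookup_qmult pairing_sum pairing_qsmult)

lemma lookup_qmult_sum_right:
  "coeff (qmult f (\<Sum>i\<in>S. qsmult (c i) (g i))) \<gamma> = (\<Sum>i\<in>S. c i * coeff (qmult f (g i)) \<gamma>)"
  by (simp add: lookup_qmult pairing_sum pairing_qsmult pairing_sum_left pairing_cmult_left)

lemma strip_first_char_morphism:
  assumes "is_comp a"
  shows "strip_first n (char_morphism \<phi> a) = (\<Sum>i\<in>{1..length a}.
    qsmult (if sum_list (take i a) = n then \<phi> (take i a) else 0) (char_morphism \<phi> (drop i a)))"
  by (rule poly_mapping_eqI)
    (auto simp: lookup_strip_first lookup_sum lookup_char_morphism assms is_comp_drop intro!: sum.cong)

lemma sum_delta_prod: "(\<Sum>p\<le>n. (if s1 = p then x1 else 0) * (if s2 = n - p then x2 else 0)) =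
   (if s1 + s2 = (n::nat) then x1 * x2 else (0::'k::field))"
proof -
  have "(\<Sum>p\<le>n. (if s1 = p then x1 else 0) * (if s2 = n - p then x2 else 0)) =
      (\<Sum>p\<le>n. if s1 = p \<and> s2 = n - p then x1 * x2 else 0)"
    by (rule sum.cong) auto
  then show ?thesis
    by (simp add: sum_delta_pair)
qed

text \<open>Both sides of the multiplicativity of \<open>char_morphism \<phi>\<close>, read at a composition \<open>n # \<gamma>\<close>,
  expand by splitting off the leading blocks \<open>take i a\<close> and \<open>take j b\<close> that merge into the
  first part \<open>n\<close>; the remainder \<open>L (drop i a) (drop j b)\<close> is read at \<open>\<gamma>\<close>.\<close>

definition first_part_expansion ::
  "(nat list \<Rightarrow> 'k::field) \<Rightarrow> (nat list \<Rightarrow> nat list \<Rightarrow> 'k) \<Rightarrow> nat \<Rightarrow> nat list \<Rightarrow> nat list \<Rightarrow> 'k" where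
  "first_part_expansion \<phi> L n a b = (\<Sum>i\<le>length a. \<Sum>j\<le>length b.
     if (i, j) = (0, 0) then 0
     else if sum_list (take i a) + sum_list (take j b) = n
     then \<phi> (take i a) * \<phi> (take j b) * L (drop i a) (drop j b) else 0)"

lemma lookup_lin_qmult_Mb:
  "coeff (lin F (qmult (Mb a) (Mb b))) \<gamma> = (\<Sum>c\<leftarrow>qsh a b. coeff (F c) \<gamma>)"
  by (simp add: lookup_lin pairing_qmult_Mb)

lemma lookup_char_morphism_Cons:
  assumes "is_comp c"
  shows "coeff (char_morphism \<phi> c) (n # \<gamma>) = (\<Sum>k\<le>length c. if take k c = [] then 0
    else if sum_list (take k c) = n then \<phi> (take k c) * coeff (char_morphism \<phi> (drop k c)) \<gamma> else 0)"
  using assms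
  by (subst sum_atMost_split_first) (auto simp: lookup_char_morphism is_comp_drop intro!: sum.cong)

lemma lookup_char_morphism_qmult_Cons:
  assumes \<phi>: "is_character \<phi>" and ab: "is_comp a" "is_comp b"
  shows "coeff (lin (char_morphism \<phi>) (qmult (Mb a) (Mb b))) (n # \<gamma>) =
    first_part_expansion \<phi> (\<lambda>x y. coeff (lin (char_morphism \<phi>) (qmult (Mb x) (Mb y))) \<gamma>) n a b"
proof -
  let ?G = "\<lambda>u v. if u = [] then 0 else if sum_list u = n then \<phi> u * coeff (char_morphism \<phi> v) \<gamma> else 0"
  have "coeff (lin (char_morphism \<phi>) (qmult (Mb a) (Mb b))) (n # \<gamma>) =
      (\<Sum>c\<leftarrow>qsh a b. \<Sum>k\<le>length c. ?G (take k c) (drop k c))"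
    unfolding lookup_lin_qmult_Mb
    by (rule sum_list_cong_set, rule lookup_char_morphism_Cons) (use ab is_comp_qsh in blast)
  also have "\<dots> = (\<Sum>i\<le>length a. \<Sum>j\<le>length b.
      \<Sum>u\<leftarrow>qsh (take i a) (take j b). \<Sum>v\<leftarrow>qsh (drop i a) (drop j b). ?G u v)"
    by (rule qsh_deconcat)
  also have "\<dots> = first_part_expansion \<phi> (\<lambda>x y. coeff (lin (char_morphism \<phi>) (qmult (Mb x) (Mb y))) \<gamma>) n a b"
    unfolding first_part_expansion_def lookup_lin_qmult_Mb
  proof (intro sum.cong refl)
    fix i j assume i: "i \<in> {..length a}" and j: "j \<in> {..length b}"
    show "(\<Sum>u\<leftarrow>qsh (take i a) (take j b). \<Sum>v\<leftarrow>qsh (drop i a) (drop j b). ?G u v) =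
      (if (i, j) = (0, 0) then 0 else if sum_list (take i a) + sum_list (take j b) = n
       then \<phi> (take i a) * \<phi> (take j b) * (\<Sum>c\<leftarrow>qsh (drop i a) (drop j b). coeff (char_morphism \<phi> c) \<gamma>)
       else 0)"
    proof (cases "(i, j) = (0, 0)")
      case False
      have "(\<Sum>u\<leftarrow>qsh (take i a) (take j b). \<Sum>v\<leftarrow>qsh (drop i a) (drop j b). ?G u v) =
         (\<Sum>u\<leftarrow>qsh (take i a) (take j b). \<Sum>v\<leftarrow>qsh (drop i a) (drop j b).
            (if sum_list (take i a) + sum_list (take j b) = n then 1 else 0) *
            (\<phi> u * coeff (char_morphism \<phi> v) \<gamma>))"
      proof (intro sum_list_cong_set)
        fix u v assume u: "u \<in> set (qsh (take i a) (take j b))"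
        have "u \<noteq> []"
          using u False i j Nil_in_qsh_iff by fastforce
        then show "?G u v = (if sum_list (take i a) + sum_list (take j b) = n then 1 else 0) *
            (\<phi> u * coeff (char_morphism \<phi> v) \<gamma>)"
          using sum_list_qsh[OF u] by simp
      qed
      also have "\<dots> = (if sum_list (take i a) + sum_list (take j b) = n then 1 else 0) *
          ((\<Sum>u\<leftarrow>qsh (take i a) (take j b). \<phi> u) *
           (\<Sum>v\<leftarrow>qsh (drop i a) (drop j b). coeff (char_morphism \<phi> v) \<gamma>))"
        by (simp add: sum_list_const_mult sum_list_mult_const ac_simps)
      finally show ?thesis
        using False is_character_mult[OF \<phi> is_comp_take[OF ab(1)] is_comp_take[OF ab(2)]] by auto
    qed simp
  qed
  finally show ?thesis .
qed

lemma lookup_qmult_char_morphism_Cons: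
  assumes \<phi>: "normalized \<phi>" and ab: "is_comp a" "is_comp b"
  shows "coeff (qmult (char_morphism \<phi> a) (char_morphism \<phi> b)) (n # \<gamma>) =
    first_part_expansion \<phi> (\<lambda>x y. coeff (qmult (char_morphism \<phi> x) (char_morphism \<phi> y)) \<gamma>) n a b"
proof -
  define L where "L x y = coeff (qmult (char_morphism \<phi> x) (char_morphism \<phi> y)) \<gamma>" for x y
  define cc where "cc p t = (if sum_list t = p then \<phi> t else 0)" for p t
  define T where "T i j = (if (i, j) = (0::nat, 0::nat) then 0 else
      if sum_list (take i a) + sum_list (take j b) = n
      then \<phi> (take i a) * \<phi> (take j b) * L (drop i a) (drop j b) else 0)" for i j
  have \<phi>0: "\<phi> [] = 1"
    using \<phi> normalized_def by blast
  have "coeff (qmult (char_morphism \<phi> a) (char_morphism \<phi> b)) (n # \<gamma>) =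
     (\<Sum>i\<in>{1..length a}. cc n (take i a) * L (drop i a) b) +
     (\<Sum>j\<in>{1..length b}. cc n (take j b) * L a (drop j b)) +
     (\<Sum>p\<le>n. \<Sum>j\<in>{1..length b}. cc (n - p) (take j b) *
        (\<Sum>i\<in>{1..length a}. cc p (take i a) * L (drop i a) (drop j b)))"
    unfolding lookup_qmult_Cons strip_first_char_morphism[OF ab(1)] strip_first_char_morphism[OF ab(2)]
      lookup_qmult_sum_left lookup_qmult_sum_right
    by (simp add: cc_def L_def)
  also have "\<dots> = (\<Sum>i\<in>{1..length a}. T i 0) + (\<Sum>j\<in>{1..length b}. T 0 j) +
      (\<Sum>i\<in>{1..length a}. \<Sum>j\<in>{1..length b}. T i j)"
  proof -
    have "(\<Sum>i\<in>{1..length a}. cc n (take i a) * L (drop i a) b) = (\<Sum>i\<in>{1..length a}. T i 0)"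
         "(\<Sum>j\<in>{1..length b}. cc n (take j b) * L a (drop j b)) = (\<Sum>j\<in>{1..length b}. T 0 j)"
      by (auto intro!: sum.cong simp: cc_def T_def \<phi>0)
    moreover have "(\<Sum>p\<le>n. \<Sum>j\<in>{1..length b}. cc (n - p) (take j b) *
        (\<Sum>i\<in>{1..length a}. cc p (take i a) * L (drop i a) (drop j b))) =
      (\<Sum>i\<in>{1..length a}. \<Sum>j\<in>{1..length b}.
        (\<Sum>p\<le>n. cc p (take i a) * cc (n - p) (take j b)) * L (drop i a) (drop j b))"
      by (simp add: sum_distrib_left sum_distrib_right sum.swap[of _ "{..n}"] ac_simps)
        (rule sum.cong[OF refl], rule sum.swap)
    moreover have "\<dots> = (\<Sum>i\<in>{1..length a}. \<Sum>j\<in>{1..length b}. T i j)"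
      by (intro sum.cong refl) (auto simp: cc_def T_def sum_delta_prod)
    ultimately show ?thesis
      by simp
  qed
  also have "\<dots> = (\<Sum>i\<le>length a. \<Sum>j\<le>length b. T i j)"
    by (simp add: sum_atMost_split_first[of _ "length a"] sum_atMost_split_first[of _ "length b"]
        sum.distrib T_def)
  finally show ?thesis
    unfolding first_part_expansion_def T_def L_def .
qed

lemma char_morphism_mult:
  assumes \<phi>: "is_character \<phi>" and ab: "is_comp a" "is_comp b"
  shows "lin (char_morphism \<phi>) (qmult (Mb a) (Mb b)) = qmult (char_morphism \<phi> a) (char_morphism \<phi> b)"
proof (rule poly_mapping_eqI)
  fix \<gamma>
  show "coeff (lin (char_morphism \<phi>) (qmult (Mb a) (Mb b))) \<gamma> =
      coeff (qmult (char_morphism \<phi> a) (char_morphism \<phi> b)) \<gamma>"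
    using ab
  proof (induction \<gamma> arbitrary: a b)
    case Nil
    have "coeff (lin (char_morphism \<phi>) (qmult (Mb a) (Mb b))) [] = (\<Sum>c\<leftarrow>qsh a b. eps c)"
      unfolding lookup_lin_qmult_Mb
      by (rule sum_list_cong_set) (use Nil is_comp_qsh in \<open>auto simp: lookup_char_morphism eps_def\<close>)
    also have "\<dots> = eps a * eps b"
      by (rule sum_qsh_eps)
    finally show ?case
      using Nil by (simp add: lookup_qmult_Nil lookup_char_morphism eps_def)
  next
    case (Cons n \<gamma>)
    have "first_part_expansion \<phi> (\<lambda>x y. coeff (lin (char_morphism \<phi>) (qmult (Mb x) (Mb y))) \<gamma>) n a b =
        first_part_expansion \<phi> (\<lambda>x y. coeff (qmult (char_morphism \<phi> x) (char_morphism \<phi> y)) \<gamma>) n a b"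
      unfolding first_part_expansion_def
      using Cons.IH[OF is_comp_drop[OF Cons.prems(1)] is_comp_drop[OF Cons.prems(2)]] by (simp cong: if_cong)
    then show ?case
      using Cons.prems \<phi>
      by (simp add: lookup_char_morphism_qmult_Cons lookup_qmult_char_morphism_Cons is_character_normalized)
  qed
qed

lemma is_graded_hopf_morphism_char_morphism:
  "is_character \<phi> \<Longrightarrow> is_graded_hopf_morphism (char_morphism \<phi>)"
  by (simp add: is_graded_hopf_morphism_iff graded_coalg_hom_char_morphism char_morphism_mult)

lemma induced_morphism_eq:
  assumes "is_character \<phi>"
  shows "induced_morphism \<phi> = char_morphism \<phi>"
  unfolding induced_morphism_def
proof (rule the_equality)
  fix F
  assume "is_graded_hopf_morphism F \<and> (\<forall>a. is_comp a \<longrightarrow> ev zetaQ (F a) = \<phi> a)"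
  then show "F = char_morphism \<phi>"
    using ev_zetaQ_char_morphism[OF is_character_normalized[OF assms]]
    by (intro graded_coalg_hom_eqI graded_coalg_hom_char_morphism) (auto simp: is_graded_hopf_morphism_iff)
qed (use assms is_graded_hopf_morphism_char_morphism ev_zetaQ_char_morphism is_character_normalized in blast)

section \<open>\<open>\<Theta>\<close>, \<open>\<Psi>\<^sub>-\<close> and the doubling morphism\<close>

lemma Theta_eq_char_morphism: "Theta = char_morphism theta_char"
  unfolding Theta_def by (rule induced_morphism_eq[OF is_character_theta_char])

lemma graded_coalg_hom_Theta: "graded_coalg_hom Theta"
  by (simp add: Theta_eq_char_morphism graded_coalg_hom_char_morphism)

lemma pullback_Theta_zetaQ: "pullback Theta zetaQ = theta_char"
  by (simp add: Theta_eq_char_morphism pullback_char_morphism_zetaQ)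

lemma lin_Theta_QSym: "lin Theta f \<in> QSym"
  by (rule lin_QSym[OF graded_coalg_hom_Theta])

text \<open>\<open>\<zeta>\<^sub>Q\<^sup>2\<close> takes the value 2 on every composition with one part, so the morphism it induces is
  triangular with respect to length, with diagonal entries \<open>2\<^sup>\<ell>\<^sup>(\<^sup>\<alpha>\<^sup>)\<close>.\<close>

definition Doubling :: "nat list \<Rightarrow> 'k::field qsym" where
  "Doubling = char_morphism (conv zetaQ zetaQ)"

lemma graded_coalg_hom_Doubling: "graded_coalg_hom Doubling"
  by (simp add: Doubling_def graded_coalg_hom_char_morphism)

lemma pullback_Doubling_zetaQ: "pullback Doubling zetaQ = conv zetaQ zetaQ"
  by (simp add: Doubling_def pullback_char_morphism_zetaQ)

context
  assumes two: "(2::'k::field) \<noteq> 0"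
begin

lemma Psi_minus_eq_char_morphism: "Psi_minus = (char_morphism zeta_minus :: nat list \<Rightarrow> 'k qsym)"
  unfolding Psi_minus_def by (rule induced_morphism_eq[OF is_character_zeta_minus[OF two]])

lemma graded_coalg_hom_Psi_minus: "graded_coalg_hom (Psi_minus :: nat list \<Rightarrow> 'k qsym)"
  by (simp add: Psi_minus_eq_char_morphism graded_coalg_hom_char_morphism)

lemma pullback_Psi_minus_zetaQ: "pullback Psi_minus zetaQ = (zeta_minus :: nat list \<Rightarrow> 'k)"
  using two by (simp add: Psi_minus_eq_char_morphism pullback_char_morphism_zetaQ)

lemma Theta_comp_Psi_minus: "(\<lambda>a. lin Theta (Psi_minus a)) = (Theta :: nat list \<Rightarrow> 'k qsym)"
proof (rule graded_coalg_hom_eqI_pullback)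
  have "pullback (\<lambda>a. lin Theta (Psi_minus a)) zetaQ = pullback Psi_minus (theta_char :: nat list \<Rightarrow> 'k)"
    by (simp add: pullback_comp pullback_Theta_zetaQ)
  also have "\<dots> = conv (cinv (cbar zeta_minus)) zeta_minus"
    unfolding theta_char_def using graded_coalg_hom_Psi_minus
    by (simp add: pullback_conv normalized_LF pullback_cinv pullback_cbar pullback_Psi_minus_zetaQ)
  also have "\<dots> = theta_char"
    by (simp add: zeta_minus_odd[OF two] conv_zeta_minus_self[OF two] normalized_zeta_minus[OF two])
  finally show "pullback (\<lambda>a. lin Theta (Psi_minus a)) zetaQ = pullback Theta (zetaQ :: nat list \<Rightarrow> 'k)"
    by (simp add: pullback_Theta_zetaQ)
qed (simp_all add: graded_coalg_hom_comp graded_coalg_hom_Psi_minus graded_coalg_hom_Theta)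

text \<open>Pulling the factorization \<open>\<zeta>\<^sub>Q = \<zeta>\<^sub>+ \<star> \<zeta>\<^sub>-\<close> back along \<open>\<Theta>\<close> gives an even-odd factorization
  of the odd character \<open>\<theta> = \<zeta>\<^sub>Q \<circ> \<Theta>\<close>; comparing it with \<open>\<theta> = \<epsilon> \<star> \<theta>\<close> shows \<open>\<zeta>\<^sub>- \<circ> \<Theta> = \<theta>\<close>.\<close>

lemma Psi_minus_comp_Theta: "(\<lambda>a. lin Psi_minus (Theta a)) = (Theta :: nat list \<Rightarrow> 'k qsym)"
proof (rule graded_coalg_hom_eqI_pullback)
  let ?p = "pullback Theta (zeta_plus :: nat list \<Rightarrow> 'k)"
  let ?m = "pullback Theta (zeta_minus :: nat list \<Rightarrow> 'k)"
  have np: "normalized ?p"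
    using is_character_normalized[OF is_character_zeta_plus[OF two]]
    by (rule normalized_pullback[OF graded_coalg_hom_Theta])
  have nm: "normalized ?m"
    using normalized_zeta_minus[OF two] by (rule normalized_pullback[OF graded_coalg_hom_Theta])
  have "conv ?p ?m = pullback Theta (conv zeta_plus zeta_minus :: nat list \<Rightarrow> 'k)"
    using normalized_LF[OF is_character_normalized[OF is_character_zeta_plus[OF two]]]
      normalized_LF[OF normalized_zeta_minus[OF two]]
    by (rule pullback_conv[symmetric, OF graded_coalg_hom_Theta])
  then have eq: "conv eps theta_char = conv ?p ?m"
    by (simp add: conv_zeta_plus_zeta_minus[OF two] pullback_Theta_zetaQ normalized_LF)
  have p_even: "is_even ?p"
    unfolding is_even_def pullback_cbar[OF graded_coalg_hom_Theta, symmetric] zeta_plus_even[OF two] ..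
  have m_odd: "is_odd ?m"
    unfolding is_odd_def pullback_cbar[OF graded_coalg_hom_Theta, symmetric] zeta_minus_odd[OF two]
    by (rule pullback_cinv[OF graded_coalg_hom_Theta normalized_zeta_minus[OF two]])
  have eps_even: "is_even (eps :: nat list \<Rightarrow> 'k)"
    by (simp add: is_even_def cbar_eps)
  have theta_odd: "is_odd (theta_char :: nat list \<Rightarrow> 'k)"
    by (simp add: is_odd_def theta_char_odd)
  have "theta_char = ?m"
    by (rule odd_factor_unique[OF two normalized_eps normalized_theta_char eps_even theta_odd np nm
          p_even m_odd eq])
  then show "pullback (\<lambda>a. lin Psi_minus (Theta a)) zetaQ = pullback Theta (zetaQ :: nat list \<Rightarrow> 'k)"
    by (simp add: pullback_comp pullback_Psi_minus_zetaQ pullback_Theta_zetaQ)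
qed (simp_all add: graded_coalg_hom_comp graded_coalg_hom_Psi_minus graded_coalg_hom_Theta)

lemma Doubling_comp_Psi_minus: "(\<lambda>a. lin Doubling (Psi_minus a)) = (Theta :: nat list \<Rightarrow> 'k qsym)"
proof (rule graded_coalg_hom_eqI_pullback)
  show "pullback (\<lambda>a. lin Doubling (Psi_minus a)) zetaQ = pullback Theta (zetaQ :: nat list \<Rightarrow> 'k)"
    by (simp add: pullback_comp pullback_Doubling_zetaQ pullback_Psi_minus_zetaQ pullback_Theta_zetaQ
        pullback_conv[OF graded_coalg_hom_Psi_minus zetaQ_LF zetaQ_LF] conv_zeta_minus_self[OF two])
qed (simp_all add: graded_coalg_hom_comp graded_coalg_hom_Psi_minus graded_coalg_hom_Theta
    graded_coalg_hom_Doubling)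

lemma lin_Theta_lin_Psi_minus: "lin Theta (lin Psi_minus f) = lin Theta (f :: 'k qsym)"
  by (simp add: lin_lin Theta_comp_Psi_minus)

lemma lin_Psi_minus_lin_Theta: "lin Psi_minus (lin Theta f) = lin Theta (f :: 'k qsym)"
  by (simp add: lin_lin Psi_minus_comp_Theta)

lemma lin_Doubling_lin_Psi_minus: "lin Doubling (lin Psi_minus f) = lin Theta (f :: 'k qsym)"
  by (simp add: lin_lin Doubling_comp_Psi_minus)

end

section \<open>Kernels and images\<close>

definition length_bounded :: "nat \<Rightarrow> 'k::field qsym \<Rightarrow> bool" where
  "length_bounded j f \<longleftrightarrow> (\<forall>\<beta>\<in>supp f. length \<beta> \<le> j)"

lemma length_bounded_0: "length_bounded 0 f \<Longrightarrow> f = qsmult (coeff f []) (Mb [])"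
  by (rule poly_mapping_eqI) (auto simp: length_bounded_def lookup_Mb in_keys_iff)

lemma length_bounded_Max: "length_bounded (Max (insert 0 (length ` supp f))) f"
  by (simp add: length_bounded_def)

lemma induced_coeff_long:
  assumes "is_comp a" "length a \<le> length \<beta>"
  shows "induced_coeff \<phi> a \<beta> = (if \<beta> = a then prod_list (map (\<lambda>x. \<phi> [x]) a) else 0)"
  using assms
proof (induction \<beta> arbitrary: a)
  case (Cons n \<beta>)
  show ?case
  proof (cases a)
    case (Cons x a')
    let ?g = "\<lambda>i. if sum_list (take i a) = n then \<phi> (take i a) * induced_coeff \<phi> (drop i a) \<beta> else 0"
    have long_blocks: "?g i = 0" if "i \<in> {2..length a}" for i
    proof -
      have "\<not> length \<beta> \<le> length (drop i a)"
        using that Cons.prems(2) by auto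
      then have "induced_coeff \<phi> (drop i a) \<beta> = 0"
        using induced_coeff_nonzero Cons.prems(1) is_comp_drop by blast
      then show ?thesis by simp
    qed
    have "{1..length a} = insert 1 {2..length a}"
      using Cons by auto
    then have "induced_coeff \<phi> a (n # \<beta>) = ?g 1"
      using long_blocks by (simp add: sum.neutral)
    also have "\<dots> = (if x = n then \<phi> [x] * induced_coeff \<phi> a' \<beta> else 0)"
      using Cons by simp
    also have "\<dots> = (if n # \<beta> = a then prod_list (map (\<lambda>x. \<phi> [x]) a) else 0)"
      using Cons.IH[of a'] Cons.prems Cons by auto
    finally show ?thesis .
  qed simp
qed simp

lemma lookup_Doubling_long:
  assumes "is_comp a" "length a \<le> length \<beta>"
  shows "coeff (Doubling a) \<beta> = (if \<beta> = a then (2::'k::field) ^ length a else 0)"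
proof -
  have "map (\<lambda>x. conv zetaQ zetaQ [x]) a = map (\<lambda>x. 2::'k) a"
    using assms(1) by (auto simp: is_comp_def conv_def raw_conv_def zetaQ_def)
  then show ?thesis
    using assms by (simp add: Doubling_def lookup_char_morphism induced_coeff_long map_replicate_const)
qed

lemma lookup_lin_Doubling_long:
  assumes "f \<in> QSym" "length_bounded j f" "j \<le> length \<beta>"
  shows "coeff (lin Doubling f) \<beta> = (2::'k::field) ^ length \<beta> * coeff f \<beta>"
proof -
  have "coeff (lin Doubling f) \<beta> = pairing (\<lambda>a. (2::'k) ^ length \<beta> * (if a = \<beta> then 1 else 0)) f"
    unfolding lookup_lin
  proof (rule pairing_cong)
    fix a assume "a \<in> supp f"
    then have "is_comp a" "length a \<le> length \<beta>"
      using assms QSym_keys by (fastforce simp: length_bounded_def)+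
    then show "coeff (Doubling a) \<beta> = (2::'k) ^ length \<beta> * (if a = \<beta> then 1 else 0)"
      by (auto simp: lookup_Doubling_long)
  qed
  then show ?thesis
    by (simp add: pairing_cmult_left pairing_indicator)
qed

lemma lin_Doubling_eq_0_iff:
  assumes two: "(2::'k::field) \<noteq> 0" and "(f :: 'k qsym) \<in> QSym"
  shows "lin Doubling f = 0 \<longleftrightarrow> f = 0"
proof
  assume zero: "lin Doubling f = 0"
  show "f = 0"
  proof (rule ccontr)
    assume "f \<noteq> 0"
    then have "Max (length ` supp f) \<in> length ` supp f"
      by (intro Max_in) auto
    then obtain \<beta> where \<beta>: "\<beta> \<in> supp f" "length \<beta> = Max (length ` supp f)"
      by auto
    have "length_bounded (length \<beta>) f"
      unfolding length_bounded_def \<beta>(2) by simp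
    then have "coeff (lin Doubling f) \<beta> = (2::'k) ^ length \<beta> * coeff f \<beta>"
      by (rule lookup_lin_Doubling_long[OF assms(2) _ order_refl])
    then have "(2::'k) ^ length \<beta> * coeff f \<beta> = 0"
      by (simp add: zero)
    then show False
      using two \<beta>(1) by (simp add: in_keys_iff)
  qed
qed simp

text \<open>On elements of length at most \<open>j + 1\<close>, \<open>Doubling - 2\<^sup>j\<^sup>+\<^sup>1\<close> kills the top length.
  Iterating, every \<open>c\<close> in a \<open>Doubling\<close>-stable subspace \<open>S\<close> is, up to a nonzero factor,
  \<open>Doubling g\<close> plus a multiple of \<open>M\<^sub>()\<close> for some \<open>g \<in> S\<close>; as \<open>Doubling (M\<^sub>()) = M\<^sub>()\<close>, this
  puts \<open>c\<close> into \<open>Doubling S\<close>.\<close>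

lemma length_bounded_Doubling_sub:
  assumes "f \<in> QSym" "length_bounded (Suc j) f"
  shows "length_bounded j (lin Doubling f + qsmult (- ((2::'k::field) ^ Suc j)) f)"
  unfolding length_bounded_def
proof
  fix \<beta> assume \<beta>: "\<beta> \<in> supp (lin Doubling f + qsmult (- ((2::'k) ^ Suc j)) f)"
  show "length \<beta> \<le> j"
  proof (rule ccontr)
    assume "\<not> length \<beta> \<le> j"
    then have long: "Suc j \<le> length \<beta>" by simp
    have "\<beta> \<notin> supp f" if "length \<beta> \<noteq> Suc j"
      using that long assms(2) by (auto simp: length_bounded_def)
    then have "coeff f \<beta> = 0" if "length \<beta> \<noteq> Suc j"
      using that by (simp add: in_keys_iff)
    then have "coeff (lin Doubling f + qsmult (- ((2::'k) ^ Suc j)) f) \<beta> = 0"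
      using lookup_lin_Doubling_long[OF assms long] by (cases "length \<beta> = Suc j") (simp_all add: lookup_add)
    then show False
      using \<beta> by (simp add: in_keys_iff)
  qed
qed

context
  fixes S :: "'k::field qsym set"
  assumes two: "(2::'k) \<noteq> 0" and S_QSym: "S \<subseteq> QSym" and Mb_Nil: "Mb [] \<in> S"
    and add: "\<And>x y. x \<in> S \<Longrightarrow> y \<in> S \<Longrightarrow> x + y \<in> S"
    and smult: "\<And>c x. x \<in> S \<Longrightarrow> qsmult c x \<in> S"
    and Doubling: "\<And>x. x \<in> S \<Longrightarrow> lin Doubling x \<in> S"
begin

lemma Doubling_approximation_step:
  assumes g: "g \<in> S" and c: "c \<in> S" and s: "s \<noteq> 0"
    and bd: "length_bounded (Suc j) (lin Doubling g + qsmult s c)"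
  shows "\<exists>g'\<in>S. \<exists>s'. s' \<noteq> 0 \<and> length_bounded j (lin Doubling g' + qsmult s' c)"
proof -
  define k where "k = - ((2::'k) ^ Suc j)"
  define g' where "g' = lin Doubling g + qsmult k g + qsmult s c"
  have "k * s \<noteq> 0"
    using two s by (simp add: k_def)
  moreover have "g' \<in> S"
    using g c by (simp add: g'_def add smult Doubling)
  moreover have "lin Doubling (lin Doubling g + qsmult s c) + qsmult k (lin Doubling g + qsmult s c) =
      lin Doubling g' + qsmult (k * s) c"
    by (rule poly_mapping_eqI) (simp add: g'_def lin_add lin_qsmult lookup_add algebra_simps)
  moreover have "lin Doubling g + qsmult s c \<in> QSym"
    using S_QSym g c by (blast intro: add smult Doubling)
  then have "length_bounded j (lin Doubling (lin Doubling g + qsmult s c) +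
      qsmult k (lin Doubling g + qsmult s c))"
    unfolding k_def by (rule length_bounded_Doubling_sub[OF _ bd])
  ultimately show ?thesis
    by (intro bexI[of _ g'] exI[of _ "k * s"]) simp_all
qed

lemma Doubling_approximation:
  assumes c: "c \<in> S"
  shows "\<exists>g\<in>S. \<exists>s. s \<noteq> 0 \<and> length_bounded 0 (lin Doubling g + qsmult s c)"
proof -
  define L where "L = Max (insert 0 (length ` supp c))"
  have "\<exists>g\<in>S. \<exists>s. s \<noteq> 0 \<and> length_bounded (L - i) (lin Doubling g + qsmult s c)" for i
  proof (induction i)
    case 0
    have "0 \<in> S"
      using smult[OF c, of 0] by simp
    then show ?case
      unfolding L_def using length_bounded_Max[of c] by (intro bexI[of _ 0] exI[of _ 1]) simp_all
  next
    case (Suc i)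
    then show ?case
      using Doubling_approximation_step[OF _ c, of _ _ "L - Suc i"]
      by (cases "i < L") (auto simp: Suc_diff_Suc)
  qed
  from this[of L] show ?thesis
    by simp
qed

lemma subset_lin_Doubling_image: "S \<subseteq> lin Doubling ` S"
proof
  fix c assume c: "c \<in> S"
  obtain g s where g: "g \<in> S" and s: "s \<noteq> 0" and bd: "length_bounded 0 (lin Doubling g + qsmult s c)"
    using Doubling_approximation[OF c] by blast
  let ?d = "lin Doubling g + qsmult s c"
  have "c = qsmult (1 / s) (?d + qsmult (- 1) (lin Doubling g))"
    using s by (intro poly_mapping_eqI) (simp add: lookup_add field_simps)
  also have "\<dots> = lin Doubling (qsmult (1 / s) (qsmult (coeff ?d []) (Mb []) + qsmult (- 1) g))"
    by (subst length_bounded_0[OF bd])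
      (simp add: lin_add lin_qsmult graded_coalg_hom_Nil[OF graded_coalg_hom_Doubling])
  finally show "c \<in> lin Doubling ` S"
    using g Mb_Nil by (blast intro: add smult)
qed

end

context
  assumes two: "(2::'k::field) \<noteq> 0"
begin

lemma image_Psi_minus_eq_image_Theta: "lin Psi_minus ` QSym = lin Theta ` (QSym :: 'k qsym set)"
proof
  show "lin Theta ` QSym \<subseteq> lin Psi_minus ` (QSym :: 'k qsym set)"
  proof
    fix x :: "'k qsym"
    assume "x \<in> lin Theta ` QSym"
    then obtain h where "x = lin Theta h" by blast
    then have "x = lin Psi_minus (lin Theta h)"
      by (simp add: lin_Psi_minus_lin_Theta[OF two])
    then show "x \<in> lin Psi_minus ` QSym"
      using lin_Theta_QSym by blast
  qed
  have "lin Psi_minus ` QSym \<subseteq> lin Doubling ` lin Psi_minus ` (QSym :: 'k qsym set)"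
  proof (rule subset_lin_Doubling_image[OF two])
    show "lin Psi_minus ` QSym \<subseteq> (QSym :: 'k qsym set)"
      using lin_QSym[OF graded_coalg_hom_Psi_minus[OF two]] by blast
    have "lin Psi_minus (Mb []) = (Mb [] :: 'k qsym)"
      by (simp add: graded_coalg_hom_Nil[OF graded_coalg_hom_Psi_minus[OF two]])
    then show "Mb [] \<in> lin Psi_minus ` (QSym :: 'k qsym set)"
      using QSym_Mb[of "[]"] by (metis image_eqI is_comp_Nil)
  next
    fix x :: "'k qsym"
    assume "x \<in> lin Psi_minus ` QSym"
    then obtain f where "f \<in> QSym" "x = lin Psi_minus f"
      by blast
    then have "lin Doubling x = lin Psi_minus (lin Theta f)"
      by (simp add: lin_Doubling_lin_Psi_minus[OF two] lin_Psi_minus_lin_Theta[OF two])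
    then show "lin Doubling x \<in> lin Psi_minus ` QSym"
      using lin_Theta_QSym by blast
  qed (simp_all add: lin_image_add lin_image_qsmult)
  also have "\<dots> = lin Theta ` QSym"
    by (auto simp: image_image lin_Doubling_lin_Psi_minus[OF two])
  finally show "lin Psi_minus ` QSym \<subseteq> lin Theta ` (QSym :: 'k qsym set)" .
qed

lemma kernel_Psi_minus_eq_kernel_Theta:
  "{f \<in> QSym. lin Psi_minus f = 0} = {f \<in> (QSym :: 'k qsym set). lin Theta f = 0}"
proof -
  have "lin Psi_minus f = 0 \<longleftrightarrow> lin Theta f = 0" for f :: "'k qsym"
  proof
    assume "lin Psi_minus f = 0"
    then show "lin Theta f = 0"
      using lin_Theta_lin_Psi_minus[OF two, of f] by simp
  next
    assume "lin Theta f = 0"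
    then show "lin Psi_minus f = 0"
      using lin_Doubling_eq_0_iff[OF two lin_QSym[OF graded_coalg_hom_Psi_minus[OF two]]]
      by (simp add: lin_Doubling_lin_Psi_minus[OF two])
  qed
  then show ?thesis
    by blast
qed

end

section \<open>The subcoalgebra \<open>\<Pi>\<^sub>-\<close>\<close>

lemma tensor_span_sum:
  "(\<And>s. s \<in> S \<Longrightarrow> x s \<in> C \<and> y s \<in> C) \<Longrightarrow> (\<Sum>s\<in>S. tensor (x s) (y s)) \<in> tensor_span C"
  by (induction S rule: infinite_finite_induct) (auto intro: tensor_span.intros)

lemma pairing_tensor_span_cong:
  assumes "t \<in> tensor_span C" "\<forall>x\<in>C. pairing \<alpha> x = pairing \<alpha>' x" "\<forall>x\<in>C. pairing \<beta> x = pairing \<beta>' x"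
  shows "pairing (\<lambda>p. \<alpha> (fst p) * \<beta> (snd p)) t = pairing (\<lambda>p. \<alpha>' (fst p) * \<beta>' (snd p)) t"
  using assms by (induction t rule: tensor_span.induct) (auto simp: pairing_add pairing_tensor)

lemma ev_conv_eq_pairing_coprod:
  "x \<in> QSym \<Longrightarrow> ev (conv \<alpha> \<beta>) x = pairing (\<lambda>p. \<alpha> (fst p) * \<beta> (snd p)) (coprod x)"
  unfolding ev_eq_pairing pairing_coprod
  by (rule pairing_cong) (auto simp: conv_def QSym_keys)

lemma ev_lin: "ev \<alpha> (lin F f) = pairing (pullback F \<alpha>) f"
  by (simp add: ev_eq_pairing pairing_lin pullback_def[abs_def])

context
  fixes F :: "nat list \<Rightarrow> 'k::field qsym"
  assumes F: "graded_coalg_hom F"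
begin

lemma graded_coalg_hom_in_lin_image: "F a \<in> lin F ` QSym"
proof (cases "is_comp a")
  case True
  then show ?thesis
    using QSym_Mb lin_Mb by (metis image_eqI)
next
  case False
  then have "F a = lin F 0"
    by (simp add: graded_coalg_hom_not_comp[OF F])
  then show ?thesis
    using QSym_zero by (metis image_eqI)
qed

lemma is_graded_subcoalgebra_lin_image: "is_graded_subcoalgebra (lin F ` QSym)"
  unfolding is_graded_subcoalgebra_def
proof (intro conjI ballI allI)
  show "lin F ` QSym \<subseteq> QSym" "0 \<in> lin F ` QSym"
    using lin_QSym[OF F] QSym_zero lin_zero by (blast, metis image_eqI)
next
  fix f g assume "f \<in> lin F ` QSym" "g \<in> lin F ` QSym"
  then show "f + g \<in> lin F ` QSym"
    by (rule lin_image_add)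
next
  fix c f assume "f \<in> lin F ` QSym"
  then show "qsmult c f \<in> lin F ` QSym"
    by (rule lin_image_qsmult)
next
  fix f n assume "f \<in> lin F ` QSym"
  then show "hcomp n f \<in> lin F ` QSym"
    by (auto simp: hcomp_lin[OF F] intro: QSym_hcomp)
next
  fix f assume "f \<in> lin F ` QSym"
  then obtain h where "h \<in> QSym" "f = lin F h"
    by blast
  moreover have "tensor_map F t \<in> tensor_span (lin F ` QSym)" for t
    unfolding tensor_map_def map_mult_tensor
    by (rule tensor_span_sum) (simp add: graded_coalg_hom_in_lin_image lin_image_qsmult)
  ultimately show "coprod f \<in> tensor_span (lin F ` QSym)"
    by (simp add: coprod_lin[OF F])
qed

end

lemma Pi_minus_prop_image_Theta: "Pi_minus_prop (lin Theta ` (QSym :: 'k::field qsym set))"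
  unfolding Pi_minus_prop_def
proof (intro conjI ballI is_graded_subcoalgebra_lin_image[OF graded_coalg_hom_Theta])
  fix f :: "'k qsym" assume "f \<in> lin Theta ` QSym"
  then obtain h where "f = lin Theta h"
    by blast
  then show "ev (cbar zetaQ) f = ev (cinv zetaQ) f"
    by (simp add: ev_lin pullback_cbar[OF graded_coalg_hom_Theta] pullback_Theta_zetaQ
        pullback_cinv[OF graded_coalg_hom_Theta] theta_char_odd)
qed

definition degree_part :: "(nat list \<Rightarrow> 'k::field) \<Rightarrow> nat \<Rightarrow> nat list \<Rightarrow> 'k" where
  "degree_part A p u = (if sum_list u = p then A u else 0)"

lemma pairing_degree_part: "pairing (degree_part A p) f = pairing A (hcomp p f)"
  by (simp add: pairing_hcomp degree_part_def[abs_def])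

lemma sum_list_take_pos_iff:
  "is_comp a \<Longrightarrow> i \<le> length a \<Longrightarrow> 1 \<le> sum_list (take i a) \<longleftrightarrow> 1 \<le> i"
  using is_comp_sum_list_pos[of "take i a"] is_comp_take[of a i]
  by (cases "i = 0"; cases a) (auto simp: Suc_le_eq)

lemma sum_list_take_less_iff:
  "is_comp a \<Longrightarrow> i \<le> length a \<Longrightarrow> sum_list (take i a) < sum_list a \<longleftrightarrow> i < length a"
  using is_comp_sum_list_pos[of "drop i a"] is_comp_drop[of a i] sum_list_take_drop[of i a]
  by (cases "i < length a") auto

lemma ev_degree_zero:
  assumes "y \<in> QSym" "\<forall>\<beta>\<in>supp y. sum_list \<beta> = 0"
  shows "ev X y = coeff y [] * X []"
proof -
  have "\<beta> = []" if "\<beta> \<in> supp y" for \<beta>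
  proof (rule ccontr)
    assume "\<beta> \<noteq> []"
    then have "0 < sum_list \<beta>"
      using that assms(1) QSym_keys is_comp_sum_list_pos by blast
    then show False
      using that assms(2) by simp
  qed
  then have "length_bounded 0 y"
    by (simp add: length_bounded_def)
  then show ?thesis
    by (subst length_bounded_0) (simp_all add: ev_eq_pairing pairing_qsmult)
qed

lemma raw_conv_self_homogeneous:
  fixes A :: "nat list \<Rightarrow> 'k::field"
  assumes a: "is_comp a" and s: "sum_list a = n" and n: "0 < n" and A0: "A [] = 1"
  shows "raw_conv A A a = 2 * A a + (\<Sum>p\<in>{1..<n}. raw_conv (degree_part A p) (degree_part A (n - p)) a)"
proof -
  have ne: "a \<noteq> []"
    using s n by auto
  have "(\<Sum>p\<in>{1..<n}. raw_conv (degree_part A p) (degree_part A (n - p)) a) =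
      (\<Sum>i\<le>length a. \<Sum>p\<in>{1..<n}. (if sum_list (take i a) = p then A (take i a) else 0) *
         (if sum_list (drop i a) = n - p then A (drop i a) else 0))"
    unfolding raw_conv_def degree_part_def by (rule sum.swap)
  also have "\<dots> = (\<Sum>i\<le>length a. if i \<in> {1..<length a} then A (take i a) * A (drop i a) else 0)"
  proof (rule sum.cong[OF refl])
    fix i assume i: "i \<in> {..length a}"
    have sd: "sum_list (drop i a) = n - sum_list (take i a)"
      using sum_list_take_drop[of i a] s by simp
    have "(\<Sum>p\<in>{1..<n}. (if sum_list (take i a) = p then A (take i a) else 0) *
        (if sum_list (drop i a) = n - p then A (drop i a) else 0)) =
        (\<Sum>p\<in>{1..<n}. if sum_list (take i a) = p then A (take i a) * A (drop i a) else 0)"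
      by (rule sum.cong) (auto simp: sd)
    also have "\<dots> = (if i \<in> {1..<length a} then A (take i a) * A (drop i a) else 0)"
      using sum_list_take_pos_iff[OF a, of i] sum_list_take_less_iff[OF a, of i] i s
      by (auto simp: sum.delta)
    finally show "(\<Sum>p\<in>{1..<n}. (if sum_list (take i a) = p then A (take i a) else 0) *
        (if sum_list (drop i a) = n - p then A (drop i a) else 0)) =
        (if i \<in> {1..<length a} then A (take i a) * A (drop i a) else 0)" .
  qed
  also have "\<dots> = (\<Sum>i\<in>{1..<length a}. A (take i a) * A (drop i a))"
    by (subst sum.inter_filter[symmetric]) (auto intro: sum.cong)
  finally show ?thesis
    unfolding raw_conv_split[OF ne] using A0 by simp
qed

lemma ev_conv_self_homogeneous:
  fixes X :: "nat list \<Rightarrow> 'k::field"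
  assumes y: "y \<in> QSym" "\<forall>\<beta>\<in>supp y. sum_list \<beta> = n" and n: "0 < n" and X: "normalized X"
  shows "ev (conv X X) y = 2 * ev X y +
    (\<Sum>p\<in>{1..<n}. pairing (\<lambda>q. degree_part X p (fst q) * degree_part X (n - p) (snd q)) (coprod y))"
proof -
  have "ev (conv X X) y =
      pairing (\<lambda>a. 2 * X a + (\<Sum>p\<in>{1..<n}. raw_conv (degree_part X p) (degree_part X (n - p)) a)) y"
    unfolding ev_eq_pairing
  proof (rule pairing_cong)
    fix a assume a: "a \<in> supp y"
    then have "is_comp a" "sum_list a = n"
      using y QSym_keys by auto
    then show "conv X X a =
        2 * X a + (\<Sum>p\<in>{1..<n}. raw_conv (degree_part X p) (degree_part X (n - p)) a)"
      using raw_conv_self_homogeneous[of a n X] n X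
      by (simp add: conv_eq_restrict_raw_conv restrict_comp_def normalized_def)
  qed
  also have "\<dots> = 2 * ev X y + (\<Sum>p\<in>{1..<n}. pairing (raw_conv (degree_part X p) (degree_part X (n - p))) y)"
    by (simp add: pairing_add_left pairing_cmult_left pairing_sum_left ev_eq_pairing)
  also have "\<dots> = 2 * ev X y +
      (\<Sum>p\<in>{1..<n}. pairing (\<lambda>q. degree_part X p (fst q) * degree_part X (n - p) (snd q)) (coprod y))"
    by (simp add: pairing_coprod raw_conv_def[abs_def])
  finally show ?thesis .
qed

context
  fixes D :: "'k::field qsym set"
  assumes D: "Pi_minus_prop D"
begin

lemma Pi_minus_prop_QSym: "x \<in> D \<Longrightarrow> x \<in> QSym"
  using D by (auto simp: Pi_minus_prop_def is_graded_subcoalgebra_def)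

lemma Pi_minus_prop_hcomp: "x \<in> D \<Longrightarrow> hcomp n x \<in> D"
  using D by (auto simp: Pi_minus_prop_def is_graded_subcoalgebra_def)

lemma Pi_minus_prop_coprod: "x \<in> D \<Longrightarrow> coprod x \<in> tensor_span D"
  using D by (auto simp: Pi_minus_prop_def is_graded_subcoalgebra_def)

lemma Pi_minus_prop_ev: "x \<in> D \<Longrightarrow> ev (cbar zetaQ) x = ev (cinv zetaQ) x"
  using D by (auto simp: Pi_minus_prop_def is_graded_subcoalgebra_def)

lemma ev_conv_cong_Pi_minus_prop:
  assumes "\<forall>x\<in>D. ev \<alpha> x = ev \<alpha>' x" "\<forall>x\<in>D. ev \<beta> x = ev \<beta>' x" "x \<in> D"
  shows "ev (conv \<alpha> \<beta>) x = ev (conv \<alpha>' \<beta>') x"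
  unfolding ev_conv_eq_pairing_coprod[OF Pi_minus_prop_QSym[OF assms(3)]]
  by (rule pairing_tensor_span_cong[OF Pi_minus_prop_coprod[OF assms(3)]])
    (use assms in \<open>auto simp: ev_eq_pairing\<close>)

text \<open>On homogeneous elements of degree \<open>n\<close>, a convolution square is twice the functional plus
  products of its parts of lower degree evaluated on the coproduct, which lies in \<open>D \<otimes> D\<close>.\<close>

lemma ev_eq_Pi_minus_prop_of_conv_self_homogeneous:
  fixes A B :: "nat list \<Rightarrow> 'k"
  assumes two: "(2::'k) \<noteq> 0" and A: "normalized A" and B: "normalized B"
    and sq: "\<forall>x\<in>D. ev (conv A A) x = ev (conv B B) x"
  shows "y \<in> D \<Longrightarrow> \<forall>\<beta>\<in>supp y. sum_list \<beta> = n \<Longrightarrow> ev A y = ev B y"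
proof (induction n arbitrary: y rule: less_induct)
  case (less n)
  have y: "y \<in> QSym"
    by (rule Pi_minus_prop_QSym[OF less.prems(1)])
  show ?case
  proof (cases "n = 0")
    case True
    then show ?thesis
      using ev_degree_zero[OF y] less.prems(2) A B by (simp add: normalized_def)
  next
    case False
    let ?T = "\<lambda>X p. pairing (\<lambda>q. degree_part X p (fst q) * degree_part X (n - p) (snd q)) (coprod y)"
    have "?T A p = ?T B p" if "p \<in> {1..<n}" for p
    proof (rule pairing_tensor_span_cong[OF Pi_minus_prop_coprod[OF less.prems(1)]])
      have "ev A (hcomp r z) = ev B (hcomp r z)" if "r < n" "z \<in> D" for r z
        using less.IH[OF that(1) Pi_minus_prop_hcomp[OF that(2)]] keys_hcomp by blast
      then show "\<forall>x\<in>D. pairing (degree_part A p) x = pairing (degree_part B p) x"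
        "\<forall>x\<in>D. pairing (degree_part A (n - p)) x = pairing (degree_part B (n - p)) x"
        using that by (simp_all add: pairing_degree_part ev_eq_pairing)
    qed
    then have "(\<Sum>p\<in>{1..<n}. ?T A p) = (\<Sum>p\<in>{1..<n}. ?T B p)"
      by (rule sum.cong[OF refl])
    moreover have "ev (conv A A) y = ev (conv B B) y"
      using sq less.prems(1) by blast
    moreover have n: "0 < n"
      using False by simp
    ultimately have "2 * ev A y = 2 * ev B y"
      unfolding ev_conv_self_homogeneous[OF y less.prems(2) n A]
        ev_conv_self_homogeneous[OF y less.prems(2) n B] by simp
    then show ?thesis
      using two by simp
  qed
qed

lemma ev_eq_Pi_minus_prop_of_conv_self:
  fixes A B :: "nat list \<Rightarrow> 'k"
  assumes two: "(2::'k) \<noteq> 0" and A: "normalized A" and B: "normalized B"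
    and sq: "\<forall>x\<in>D. ev (conv A A) x = ev (conv B B) x" and x: "x \<in> D"
  shows "ev A x = ev B x"
proof -
  have "ev A x = (\<Sum>n\<in>sum_list ` supp x. ev A (hcomp n x))"
    unfolding ev_eq_pairing by (rule pairing_eq_sum_hcomp)
  also have "\<dots> = (\<Sum>n\<in>sum_list ` supp x. ev B (hcomp n x))"
    using ev_eq_Pi_minus_prop_of_conv_self_homogeneous[OF two A B sq Pi_minus_prop_hcomp[OF x]] keys_hcomp
    by (intro sum.cong) blast+
  also have "\<dots> = ev B x"
    unfolding ev_eq_pairing by (rule pairing_eq_sum_hcomp[symmetric])
  finally show ?thesis .
qed

end

context
  fixes D :: "'k::field qsym set"
  assumes two: "(2::'k) \<noteq> 0" and D: "Pi_minus_prop D"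
begin

text \<open>On \<open>D\<close> the identity \<open>cbar \<zeta>\<^sub>Q = \<zeta>\<^sub>Q\<^sup>-\<^sup>1\<close> turns \<open>\<zeta>\<^sub>Q \<star> \<zeta>\<^sub>-\<^sup>-\<^sup>1 = \<zeta>\<^sub>+ = cbar \<zeta>\<^sub>+ = cbar \<zeta>\<^sub>Q \<star> \<zeta>\<^sub>-\<close>
  into \<open>\<zeta>\<^sub>Q \<star> \<zeta>\<^sub>Q = \<zeta>\<^sub>- \<star> \<zeta>\<^sub>-\<close>; taking square roots, \<open>\<zeta>\<^sub>Q\<close> and \<open>\<zeta>\<^sub>-\<close> agree on \<open>D\<close>.\<close>

lemma ev_conv_zetaQ_self_Pi_minus_prop:
  assumes x: "x \<in> D"
  shows "ev (conv zetaQ zetaQ) x = ev (conv zeta_minus zeta_minus) x"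
proof -
  let ?Z = "zetaQ :: nat list \<Rightarrow> 'k" and ?m = "zeta_minus :: nat list \<Rightarrow> 'k"
  have nm: "normalized ?m"
    by (rule normalized_zeta_minus[OF two])
  have "conv ?Z (cinv ?m) = zeta_plus"
    using nm is_character_normalized[OF is_character_zeta_plus[OF two]]
    by (simp add: conv_assoc normalized_LF flip: conv_zeta_plus_zeta_minus[OF two])
  also have "\<dots> = cbar zeta_plus"
    by (simp add: zeta_plus_even[OF two])
  also have "\<dots> = conv (cbar ?Z) ?m"
    using nm by (simp add: zeta_plus_def cbar_conv cbar_cinv zeta_minus_odd[OF two])
  finally have plus: "conv ?Z (cinv ?m) = conv (cbar ?Z) ?m" .
  have bar_agrees: "\<forall>x\<in>D. ev (conv (cbar ?Z) ?m) x = ev (conv (cinv ?Z) ?m) x"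
    using ev_conv_cong_Pi_minus_prop[OF D] Pi_minus_prop_ev[OF D] by blast
  have bar_agrees_left: "\<forall>x\<in>D. ev (conv ?Z (conv (cbar ?Z) ?m)) x = ev (conv ?Z (conv (cinv ?Z) ?m)) x"
    using ev_conv_cong_Pi_minus_prop[OF D] bar_agrees by blast
  have "conv ?Z (conv (cinv ?Z) ?m) = ?m"
    using nm by (simp add: normalized_LF flip: conv_assoc)
  moreover have "conv ?Z (conv (cbar ?Z) ?m) = conv (conv ?Z ?Z) (cinv ?m)"
    using nm by (simp add: normalized_LF conv_assoc flip: plus)
  ultimately have "\<forall>x\<in>D. ev (conv (conv (conv ?Z ?Z) (cinv ?m)) ?m) x = ev (conv ?m ?m) x"
    using ev_conv_cong_Pi_minus_prop[OF D] bar_agrees_left by simp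
  moreover have "conv (conv (conv ?Z ?Z) (cinv ?m)) ?m = conv ?Z ?Z"
    using nm by (simp add: normalized_LF conv_assoc)
  ultimately show ?thesis
    using x by simp
qed

lemma ev_zeta_minus_Pi_minus_prop: "x \<in> D \<Longrightarrow> ev zeta_minus x = ev zetaQ x"
  using ev_eq_Pi_minus_prop_of_conv_self[OF D two normalized_zeta_minus[OF two] normalized_zetaQ]
    ev_conv_zetaQ_self_Pi_minus_prop by simp

lemma lookup_lin_Psi_minus_singleton:
  assumes x: "x \<in> D"
  shows "coeff (lin Psi_minus x) [n] = coeff x [n]"
proof (cases "n = 0")
  case True
  have "\<not> is_comp [n]" "lin Psi_minus x \<in> QSym" "x \<in> QSym"
    using True lin_QSym[OF graded_coalg_hom_Psi_minus[OF two]] Pi_minus_prop_QSym[OF D x] by simp_all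
  then show ?thesis
    by (metis QSym_keys in_keys_iff)
next
  case False
  have xq: "x \<in> QSym"
    by (rule Pi_minus_prop_QSym[OF D x])
  have "coeff (lin Psi_minus x) [n] = pairing (\<lambda>a. if sum_list a = n then zeta_minus a else 0) x"
    unfolding lookup_lin
  proof (rule pairing_cong)
    fix a assume "a \<in> supp x"
    then have a: "is_comp a"
      using xq QSym_keys by blast
    have ev: "ev zetaQ (Psi_minus a) = (zeta_minus a :: 'k)"
      using pullback_Psi_minus_zetaQ[OF two] by (metis pullback_def)
    have "a \<noteq> []" if "sum_list a = n"
      using that False by auto
    then show "coeff (Psi_minus a :: 'k qsym) [n] = (if sum_list a = n then zeta_minus a else 0)"
      using graded_coalg_hom_lookup_singleton[OF graded_coalg_hom_Psi_minus[OF two] a, of n] ev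
      by auto
  qed
  also have "\<dots> = ev zeta_minus (hcomp n x)"
    by (simp add: pairing_hcomp ev_eq_pairing)
  also have "\<dots> = ev zetaQ (hcomp n x)"
    by (rule ev_zeta_minus_Pi_minus_prop[OF Pi_minus_prop_hcomp[OF D x]])
  also have "\<dots> = pairing (\<lambda>a. if a = [n] then 1 else 0) x"
    unfolding ev_eq_pairing pairing_hcomp
  proof (rule pairing_cong)
    fix a assume "a \<in> supp x"
    then have "is_comp a"
      using xq QSym_keys by blast
    then show "(if sum_list a = n then zetaQ a else 0) = (if a = [n] then 1 else (0::'k))"
      using False by (cases a; cases "tl a") (auto simp: zetaQ_def)
  qed
  also have "\<dots> = coeff x [n]"
    by (rule pairing_indicator)
  finally show ?thesis .
qed

text \<open>\<open>\<Psi>\<^sub>-\<close> fixes \<open>D\<close> pointwise: on the coefficients of one-part compositions this is the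
  previous lemma, and the coproduct propagates it to all coefficients.\<close>

lemma lin_Psi_minus_Pi_minus_prop: "x \<in> D \<Longrightarrow> lin Psi_minus x = x"
proof -
  have "\<forall>x\<in>D. coeff (lin Psi_minus x) \<beta> = coeff x \<beta>" for \<beta>
  proof (induction \<beta>)
    case Nil
    show ?case
    proof
      fix x
      have "coeff (lin Psi_minus x) [] = pairing (\<lambda>a. if a = [] then 1 else (0::'k)) x"
        unfolding lookup_lin
        by (rule pairing_cong) (simp add: graded_coalg_hom_lookup_Nil[OF graded_coalg_hom_Psi_minus[OF two]])
      then show "coeff (lin Psi_minus x) [] = coeff x []"
        by (simp add: pairing_indicator)
    qed
  next
    case (Cons n \<beta>)
    show ?case
    proof
      fix x assume x: "x \<in> D"
      have "coeff (lin Psi_minus x) (n # \<beta>) = coeff (coprod (lin Psi_minus x)) ([n], \<beta>)"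
        by (simp add: lookup_coprod)
      also have "\<dots> = pairing (\<lambda>p. coeff (Psi_minus (fst p)) [n] * coeff (Psi_minus (snd p)) \<beta>) (coprod x)"
        by (simp add: coprod_lin[OF graded_coalg_hom_Psi_minus[OF two] Pi_minus_prop_QSym[OF D x]]
            lookup_tensor_map)
      also have "\<dots> = pairing (\<lambda>p. (if fst p = [n] then 1 else 0) * (if snd p = \<beta> then 1 else 0)) (coprod x)"
      proof (rule pairing_tensor_span_cong[OF Pi_minus_prop_coprod[OF D x]])
        show "\<forall>x\<in>D. pairing (\<lambda>a. coeff (Psi_minus a) [n]) x = pairing (\<lambda>a. if a = [n] then 1 else 0) x"
          using lookup_lin_Psi_minus_singleton by (simp add: pairing_indicator flip: lookup_lin)
        show "\<forall>x\<in>D. pairing (\<lambda>a. coeff (Psi_minus a) \<beta>) x = pairing (\<lambda>a. if a = \<beta> then 1 else 0) x"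
          using Cons by (simp add: pairing_indicator flip: lookup_lin)
      qed
      also have "\<dots> = pairing (\<lambda>p. if p = ([n], \<beta>) then 1 else 0) (coprod x)"
        by (rule pairing_cong) auto
      also have "\<dots> = coeff x (n # \<beta>)"
        by (simp add: pairing_indicator lookup_coprod)
      finally show "coeff (lin Psi_minus x) (n # \<beta>) = coeff x (n # \<beta>)" .
    qed
  qed
  then show "x \<in> D \<Longrightarrow> lin Psi_minus x = x"
    by (auto intro: poly_mapping_eqI)
qed

lemma Pi_minus_prop_subset_image_Theta: "D \<subseteq> lin Theta ` QSym"
proof
  fix x assume x: "x \<in> D"
  then have "x \<in> lin Psi_minus ` QSym"
    using lin_Psi_minus_Pi_minus_prop Pi_minus_prop_QSym[OF D] by (metis image_eqI)
  then show "x \<in> lin Theta ` QSym"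
    by (simp add: image_Psi_minus_eq_image_Theta[OF two])
qed

end

lemma Pi_minus_eq_image_Theta:
  assumes two: "(2::'k::field) \<noteq> 0"
  shows "Pi_minus = lin Theta ` (QSym :: 'k qsym set)"
  unfolding Pi_minus_def
proof (rule the_equality)
  fix C :: "'k qsym set"
  assume "Pi_minus_prop C \<and> (\<forall>D. Pi_minus_prop D \<longrightarrow> D \<subseteq> C)"
  then show "C = lin Theta ` QSym"
    using Pi_minus_prop_subset_image_Theta[OF two] Pi_minus_prop_image_Theta by blast
qed (use Pi_minus_prop_subset_image_Theta[OF two] Pi_minus_prop_image_Theta in blast)

theorem proposition6p9:
  assumes "(2::'k::field) \<noteq> 0"
  shows "(\<forall>f\<in>(QSym :: 'k qsym set). lin Theta (lin Psi_minus f) = lin Theta f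
                                   \<and> lin Psi_minus (lin Theta f) = lin Theta f)
         \<and> lin Psi_minus ` (QSym :: 'k qsym set) = lin Theta ` QSym
         \<and> lin Theta ` (QSym :: 'k qsym set) = Pi_minus
         \<and> {f \<in> (QSym :: 'k qsym set). lin Psi_minus f = 0} = {f \<in> QSym. lin Theta f = 0}"
  using lin_Theta_lin_Psi_minus[OF assms] lin_Psi_minus_lin_Theta[OF assms]
    image_Psi_minus_eq_image_Theta[OF assms] Pi_minus_eq_image_Theta[OF assms]
    kernel_Psi_minus_eq_kernel_Theta[OF assms]
  by simp

end
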